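(* Let $K\ge 2$, let $\boldsymbol{\pi}\in(0,1)^K$ with $\sum_k\pi_k=1$, and let $\mathbf{B}\in(0,1)^{K\times K}$ be symmetric with pairwise distinct rows. Let $p_0\in(0,1)$ and $p_1\in(0,1-p_0)$, and set $\mathbf{B}_0=p_0\mathbf{B}$ and $\mathbf{B}_1=\mathbf{B}_0+p_1\mathbf{B}=(p_0+p_1)\mathbf{B}$. Then $\mathbf{B}\succ\mathbf{B}_1\succ\mathbf{B}_0$, i.e. $\rho_{\mathbf{B}}>\rho_{\mathbf{B}_1}>\rho_{\mathbf{B}_0}$.
   Context: For a symmetric $\mathbf{B}\in(0,1)^{K\times K}$ with $d_+\ge1$ strictly positive and $d_-\ge 0$ strictly negative eigenvalues, let $d=d_++d_-$ and $\mathbf{I}_{d_+d_-}=\mathrm{diag}(\mathbf{I}_{d_+},-\mathbf{I}_{d_-})$. Write $\mathbf{B}=\mathbf{U}\mathbf{S}\mathbf{U}^\top$ where $\mathbf{S}\in\mathbb{R}^{d\times d}$ is the diagonal matrix of nonzero eigenvalues (positive ones first) and $\mathbf{U}\in\mathbb{R}^{K\times d}$ has orthonormal columns, and set $\boldsymbol{\nu}=\mathbf{U}|\mathbf{S}|^{1/2}\in\mathbb{R}^{K\times d}$ with rows $\boldsymbol{\nu}_1,\dots,\boldsymbol{\nu}_K$, so that $\boldsymbol{\nu}_k^\top\mathbf{I}_{d_+d_-}\boldsymbol{\nu}_\ell=\mathbf{B}_{k\ell}$. Given block assignment probabilities $\boldsymbol{\pi}\in(0,1)^K$ summing to one, define $\boldsymbol{\Delta}=\sum_{\ell=1}^K\pi_\ell\boldsymbol{\nu}_\ell\boldsymbol{\nu}_\ell^\top$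 and, for each $k$, $$\boldsymbol{\Sigma}_k=\mathbf{I}_{d_+d_-}\boldsymbol{\Delta}^{-1}\Big[\sum_{\ell=1}^K\pi_\ell\,\mathbf{B}_{k\ell}(1-\mathbf{B}_{k\ell})\,\boldsymbol{\nu}_\ell\boldsymbol{\nu}_\ell^\top\Big]\boldsymbol{\Delta}^{-1}\mathbf{I}_{d_+d_-}.$$ For $t\in(0,1)$ let $\boldsymbol{\Sigma}_{k\ell}(t)=t\boldsymbol{\Sigma}_k+(1-t)\boldsymbol{\Sigma}_\ell$, and define $$C_{k,\ell}(\mathbf{B},\boldsymbol{\pi})=\sup_{t\in(0,1)}\Big[t(1-t)(\boldsymbol{\nu}_k-\boldsymbol{\nu}_\ell)^\top\boldsymbol{\Sigma}_{k\ell}(t)^{-1}(\boldsymbol{\nu}_k-\boldsymbol{\nu}_\ell)\Big],$$ and the (approximate) Chernoff information $\rho_{\mathbf{B}}=\min_{k\neq\ell}C_{k,\ell}(\mathbf{B},\boldsymbol{\pi})$. For two such matrices $\mathbf{B},\mathbf{B}'$ with the same $\boldsymbol{\pi}$, $\mathbf{B}$ is called Chernoff superior to $\mathbf{B}'$, written $\mathbf{B}\succ\mathbf{B}'$, if $\rho_{\mathbf{B}}>\rho_{\mathbf{B}'}$. *)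

theory Defs
  imports "Jordan_Normal_Form.Gauss_Jordan_Elimination"
begin

definition spec_decomp :: "real mat \<Rightarrow> nat \<Rightarrow> nat \<Rightarrow> real mat \<Rightarrow> real mat \<Rightarrow> bool" where
  "spec_decomp B dp dm U S \<longleftrightarrow>
     1 \<le> dp \<and>
     U \<in> carrier_mat (dim_row B) (dp + dm) \<and>
     S \<in> carrier_mat (dp + dm) (dp + dm) \<and>
     diagonal_mat S \<and>
     (\<forall>i<dp. S $$ (i,i) > 0) \<and>
     (\<forall>i. dp \<le> i \<and> i < dp + dm \<longrightarrow> S $$ (i,i) < 0) \<and>
     transpose_mat U * U = 1\<^sub>m (dp + dm) \<and>
     B = U * S * transpose_mat U"

definition Ipm :: "nat \<Rightarrow> nat \<Rightarrow> real mat" where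
  "Ipm dp dm = mat (dp + dm) (dp + dm) (\<lambda>(i,j). if i = j then (if i < dp then 1 else -1) else 0)"

definition nu_mat :: "real mat \<Rightarrow> real mat \<Rightarrow> real mat" where
  "nu_mat U S = U * mat (dim_row S) (dim_col S) (\<lambda>(i,j). if i = j then sqrt \<bar>S $$ (i,i)\<bar> else 0)"

definition minv :: "real mat \<Rightarrow> real mat" where
  "minv A = the (mat_inverse A)"

definition Delta_mat :: "nat \<Rightarrow> (nat \<Rightarrow> real) \<Rightarrow> real mat \<Rightarrow> real mat" where
  "Delta_mat K ppi nu = mat (dim_col nu) (dim_col nu)
     (\<lambda>(i,j). \<Sum>l<K. ppi l * nu $$ (l,i) * nu $$ (l,j))"

definition Sigma_mat :: "real mat \<Rightarrow> (nat \<Rightarrow> real) \<Rightarrow> nat \<Rightarrow> nat \<Rightarrow> real mat \<Rightarrow> nat \<Rightarrow> real mat" where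
  "Sigma_mat B ppi dp dm nu k =
     (let K = dim_row B; Di = minv (Delta_mat K ppi nu);
          M = mat (dim_col nu) (dim_col nu)
                (\<lambda>(i,j). \<Sum>l<K. ppi l * B $$ (k,l) * (1 - B $$ (k,l)) * nu $$ (l,i) * nu $$ (l,j))
      in Ipm dp dm * Di * M * Di * Ipm dp dm)"

definition C_kl :: "real mat \<Rightarrow> (nat \<Rightarrow> real) \<Rightarrow> nat \<Rightarrow> nat \<Rightarrow> real mat \<Rightarrow> nat \<Rightarrow> nat \<Rightarrow> real" where
  "C_kl B ppi dp dm nu k l =
     (SUP t\<in>{0<..<1::real}.
        (let x = row nu k - row nu l;
             St = t \<cdot>\<^sub>m Sigma_mat B ppi dp dm nu k + (1 - t) \<cdot>\<^sub>m Sigma_mat B ppi dp dm nu l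
         in t * (1 - t) * (x \<bullet> (minv St *\<^sub>v x))))"

definition rho_emb :: "real mat \<Rightarrow> (nat \<Rightarrow> real) \<Rightarrow> nat \<Rightarrow> nat \<Rightarrow> real mat \<Rightarrow> real" where
  "rho_emb B ppi dp dm nu =
     Min {C_kl B ppi dp dm nu k l | k l. k < dim_row B \<and> l < dim_row B \<and> k \<noteq> l}"

text \<open>Chernoff information rho_B, computed from a (chosen) decomposition B = U S U^T.\<close>
definition chernoff_rho :: "real mat \<Rightarrow> (nat \<Rightarrow> real) \<Rightarrow> real" where
  "chernoff_rho B ppi =
     (case (SOME x. case x of (dp, dm, U, S) \<Rightarrow> spec_decomp B dp dm U S) of
        (dp, dm, U, S) \<Rightarrow> rho_emb B ppi dp dm (nu_mat U S))"

definition chernoff_superior :: "real mat \<Rightarrow> real mat \<Rightarrow> (nat \<Rightarrow> real) \<Rightarrow> bool" where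
  "chernoff_superior B B' ppi \<longleftrightarrow> chernoff_rho B ppi > chernoff_rho B' ppi"

end

theory Submission
  imports Defs "Jordan_Normal_Form.Char_Poly" "HOL-Computational_Algebra.Fundamental_Theorem_Algebra"
begin

text \<open>Put \<open>x = \<nu>\<^sub>k - \<nu>\<^sub>l\<close> and \<open>\<Sigma>\<^sub>t = t \<Sigma>\<^sub>k + (1 - t) \<Sigma>\<^sub>l\<close>. In the coordinates
  \<open>u = \<nu> w\<close>, completing the square shows that \<open>x\<^sup>T \<Sigma>\<^sub>t\<^sup>-\<^sup>1 x\<close> is the maximum, over \<open>u\<close> in the
  column space of \<open>B\<close>, of
  \<open>2 \<Sum>\<^sub>i \<pi>\<^sub>i (B\<^sub>i\<^sub>k - B\<^sub>i\<^sub>l) u\<^sub>i - \<Sum>\<^sub>i \<pi>\<^sub>i (t B\<^sub>k\<^sub>i (1 - B\<^sub>k\<^sub>i) + (1 - t) B\<^sub>l\<^sub>i (1 - B\<^sub>l\<^sub>i)) u\<^sub>i\<^sup>2\<close>.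
  This no longer refers to the spectral decomposition, and the column space of \<open>c B\<close> does not
  depend on \<open>c > 0\<close>. Replacing \<open>c B\<close> by \<open>c' B\<close> with \<open>c < c'\<close> multiplies the linear term by
  \<open>c'/c\<close> and the weights by at most \<open>c'/c\<close>, so every objective value, hence every \<open>C\<^sub>k\<^sub>,\<^sub>l\<close>,
  grows by at least the factor \<open>c'/c > 1\<close>; as \<open>C\<^sub>k\<^sub>,\<^sub>l > 0\<close> for distinct rows, \<open>\<rho>\<^sub>c\<^sub>B\<close> is strictly
  increasing in \<open>c \<in> (0, 1]\<close>.\<close>

lemma mat_diag_mult_vec:
  assumes "v \<in> carrier_vec n"
  shows "mat_diag n f *\<^sub>v v = vec n (\<lambda>i. f i * v $ i)"
proof (rule eq_vecI)
  fix i assume "i < dim_vec (vec n (\<lambda>i. f i * v $ i))"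
  hence i: "i < n" by simp
  have "(mat_diag n f *\<^sub>v v) $ i = (\<Sum>j\<in>{0..<n}. (if i = j then f j else 0) * v $ j)"
    using assms i by (simp add: mat_diag_def scalar_prod_def)
  also have "\<dots> = (\<Sum>j\<in>{0..<n}. if j = i then f i * v $ i else 0)" by (rule sum.cong) auto
  also have "\<dots> = f i * v $ i" using i by simp
  finally show "(mat_diag n f *\<^sub>v v) $ i = vec n (\<lambda>i. f i * v $ i) $ i" using i by simp
qed (simp add: mat_diag_def)

lemma index_mult_mat_diag_transpose:
  assumes "A \<in> carrier_mat n d" "C \<in> carrier_mat m d" "a < n" "b < m"
  shows "(A * mat_diag d f * transpose_mat C) $$ (a, b) = (\<Sum>j<d. A $$ (a, j) * f j * C $$ (b, j))"
  using assms by (simp add: mat_diag_mult_right[of A n d] scalar_prod_def atLeast0LessThan)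

lemma mult_unit_vec_index:
  fixes A :: "'a::semiring_1 mat"
  assumes "A \<in> carrier_mat nr m" "i < m" "j < nr"
  shows "(A *\<^sub>v unit_vec m i) $ j = A $$ (j, i)"
  using assms scalar_prod_right_unit[of i m "row A j"] by auto

lemma eq_mat_by_unit_vecI:
  fixes A B :: "'a::semiring_1 mat"
  assumes "A \<in> carrier_mat nr m" "B \<in> carrier_mat nr m"
    and "\<And>i. i < m \<Longrightarrow> A *\<^sub>v unit_vec m i = B *\<^sub>v unit_vec m i"
  shows "A = B"
proof (rule eq_matI)
  fix j i assume "j < dim_row B" "i < dim_col B"
  thus "A $$ (j, i) = B $$ (j, i)"
    using assms mult_unit_vec_index[of A nr m i j] mult_unit_vec_index[of B nr m i j] by auto
qed (use assms in auto)

lemma scalar_prod_self_pos: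
  fixes v :: "real vec"
  assumes "v \<in> carrier_vec n" "v \<noteq> 0\<^sub>v n"
  shows "v \<bullet> v > 0"
proof -
  obtain i where i: "i < n" "v $ i \<noteq> 0" using assms by (metis eq_vecI carrier_vecD index_zero_vec)
  have "v \<bullet> v = (\<Sum>j\<in>{0..<n}. (v $ j)\<^sup>2)" using assms by (simp add: scalar_prod_def power2_eq_square)
  also have "\<dots> > 0" by (rule sum_pos2[of _ i]) (use i in auto)
  finally show ?thesis .
qed

lemma minus_vec_eq_zero_iff:
  fixes a b :: "'a::ab_group_add vec"
  assumes "a \<in> carrier_vec n" "b \<in> carrier_vec n"
  shows "a - b = 0\<^sub>v n \<longleftrightarrow> a = b"
  using assms by (metis (no_types, lifting) comm_add_vec minus_add_minus_vec minus_cancel_vec uminus_eq_vec zero_minus_vec)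

lemma scalar_prod_symmetric_mat:
  fixes A :: "'a::comm_ring mat"
  assumes "A \<in> carrier_mat n n" "transpose_mat A = A" "u \<in> carrier_vec n" "v \<in> carrier_vec n"
  shows "u \<bullet> (A *\<^sub>v v) = (A *\<^sub>v u) \<bullet> v"
  using transpose_vec_mult_scalar[of A n n v u] assms comm_scalar_prod[of _ n] by auto

lemma symmetric_mat_transpose_conj:
  fixes A V :: "'a::comm_ring mat"
  assumes "A \<in> carrier_mat n n" "V \<in> carrier_mat n m" "transpose_mat A = A"
  shows "transpose_mat (transpose_mat V * A * V) = transpose_mat V * A * V"
proof -
  have "transpose_mat (transpose_mat V * A * V) = transpose_mat V * transpose_mat (transpose_mat V * A)"
    using assms by (subst transpose_mult[of _ m n]) auto
  also have "transpose_mat (transpose_mat V * A) = transpose_mat A * V"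
    using assms by (subst transpose_mult[of _ m n]) auto
  finally show ?thesis using assms by (simp add: assoc_mult_mat[of _ m n _ n _ m])
qed

lemma minv_inverse:
  fixes A :: "real mat"
  assumes A: "A \<in> carrier_mat n n" and det: "det A \<noteq> 0"
  shows "A * minv A = 1\<^sub>m n" "minv A * A = 1\<^sub>m n" "minv A \<in> carrier_mat n n"
proof -
  have "mat_inverse A \<noteq> None"
    using mat_inverse(1)[OF A, of "()"] det_non_zero_imp_unit[OF A det, of "()"] by auto
  then obtain Y where "mat_inverse A = Some Y" by auto
  thus "A * minv A = 1\<^sub>m n" "minv A * A = 1\<^sub>m n" "minv A \<in> carrier_mat n n"
    using mat_inverse(2)[OF A] unfolding minv_def by auto
qed

lemma minv_mult_vec_cancel:
  fixes A :: "real mat"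
  assumes A: "A \<in> carrier_mat n n" and det: "det A \<noteq> 0" and v: "v \<in> carrier_vec n"
  shows "minv A *\<^sub>v (A *\<^sub>v v) = v" "A *\<^sub>v (minv A *\<^sub>v v) = v"
  using minv_inverse[OF A det] A v by (metis assoc_mult_mat_vec one_mult_mat_vec)+

lemma det_nonzero_if_left_inverse:
  fixes A B :: "real mat"
  assumes "A \<in> carrier_mat n n" "B \<in> carrier_mat n n" "B * A = 1\<^sub>m n"
  shows "det A \<noteq> 0"
  using det_mult[of B n A] assms by auto

lemma scalar_prod_transpose_mult_vec:
  fixes A :: "'a::comm_semiring_0 mat"
  assumes A: "A \<in> carrier_mat nr nc" and x: "x \<in> carrier_vec nc" and y: "y \<in> carrier_vec nr"
  shows "x \<bullet> (transpose_mat A *\<^sub>v y) = (A *\<^sub>v x) \<bullet> y"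
proof -
  have "x \<bullet> (transpose_mat A *\<^sub>v y) = (transpose_mat A *\<^sub>v y) \<bullet> x"
    using A x y by (intro comm_scalar_prod[of _ nc]) auto
  also have "\<dots> = y \<bullet> (A *\<^sub>v x)" by (rule transpose_vec_mult_scalar[OF A x y])
  also have "\<dots> = (A *\<^sub>v x) \<bullet> y" using A x y by (intro comm_scalar_prod[of _ nr]) auto
  finally show ?thesis .
qed

lemma transpose_diag_mult_vec:
  fixes N :: "real mat"
  assumes "N \<in> carrier_mat K d" "w \<in> carrier_vec d"
  shows "(transpose_mat N * mat_diag K g * N) *\<^sub>v w = transpose_mat N *\<^sub>v (mat_diag K g *\<^sub>v (N *\<^sub>v w))"
  using assms by (simp add: assoc_mult_mat_vec[of _ d K _ d] assoc_mult_mat_vec[of _ d K _ K])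

lemma quadratic_form_transpose_diag:
  fixes N :: "real mat"
  assumes N: "N \<in> carrier_mat K d" and v: "v \<in> carrier_vec d" and w: "w \<in> carrier_vec d"
  shows "v \<bullet> ((transpose_mat N * mat_diag K g * N) *\<^sub>v w) = (\<Sum>i<K. g i * (N *\<^sub>v v) $ i * (N *\<^sub>v w) $ i)"
proof -
  have Nw: "N *\<^sub>v w \<in> carrier_vec K" using N w by simp
  have "v \<bullet> ((transpose_mat N * mat_diag K g * N) *\<^sub>v w) = (N *\<^sub>v v) \<bullet> (mat_diag K g *\<^sub>v (N *\<^sub>v w))"
    using scalar_prod_transpose_mult_vec[OF N v mult_mat_vec_carrier[OF mat_diag_dim Nw]]
    by (simp add: transpose_diag_mult_vec[OF N w])
  thus ?thesis using Nw by (simp add: mat_diag_mult_vec scalar_prod_def atLeast0LessThan mult_ac)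
qed

lemma transpose_diag_carrier[simp]:
  "N \<in> carrier_mat K d \<Longrightarrow> transpose_mat N * mat_diag K g * N \<in> carrier_mat d d"
  by (metis mat_diag_dim mult_carrier_mat transpose_carrier_mat)

lemma symmetric_transpose_diag:
  fixes N :: "real mat"
  assumes "N \<in> carrier_mat K d"
  shows "transpose_mat (transpose_mat N * mat_diag K g * N) = transpose_mat N * mat_diag K g * N"
  using assms by (intro eq_matI) (auto simp: mat_diag_mult_right[of _ d K] scalar_prod_def mult_ac)

lemma det_transpose_diag_nonzero:
  fixes N :: "real mat"
  assumes N: "N \<in> carrier_mat K d" and g: "\<And>i. i < K \<Longrightarrow> g i > 0"
    and inj: "\<And>w. w \<in> carrier_vec d \<Longrightarrow> N *\<^sub>v w = 0\<^sub>v K \<Longrightarrow> w = 0\<^sub>v d"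
  shows "det (transpose_mat N * mat_diag K g * N) \<noteq> 0"
proof -
  have "w = 0\<^sub>v d" if w: "w \<in> carrier_vec d" and z: "(transpose_mat N * mat_diag K g * N) *\<^sub>v w = 0\<^sub>v d" for w
  proof -
    have "(\<Sum>i<K. g i * ((N *\<^sub>v w) $ i)\<^sup>2) = 0"
      using quadratic_form_transpose_diag[OF N w w, of g] z w by (simp add: power2_eq_square mult.assoc)
    moreover have "0 \<le> g i * ((N *\<^sub>v w) $ i)\<^sup>2" if "i < K" for i using g[OF that] by simp
    ultimately have "\<forall>i\<in>{..<K}. g i * ((N *\<^sub>v w) $ i)\<^sup>2 = 0"
      using sum_nonneg_eq_0_iff[of "{..<K}" "\<lambda>i. g i * ((N *\<^sub>v w) $ i)\<^sup>2"] by simp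
    hence "N *\<^sub>v w = 0\<^sub>v K" using g N by (intro eq_vecI) (auto, metis lessThan_iff less_irrefl)
    thus ?thesis by (rule inj[OF w])
  qed
  moreover have "transpose_mat N * mat_diag K g * N \<in> carrier_mat d d" using N by simp
  ultimately show ?thesis using det_0_iff_vec_prod_zero[of "transpose_mat N * mat_diag K g * N" d] by blast
qed

lemma smult_mat_mult_vec:
  fixes A :: "real mat"
  assumes A: "A \<in> carrier_mat n m" and v: "v \<in> carrier_vec m"
  shows "(a \<cdot>\<^sub>m A) *\<^sub>v v = a \<cdot>\<^sub>v (A *\<^sub>v v)"
proof (rule eq_vecI)
  fix i assume "i < dim_vec (a \<cdot>\<^sub>v (A *\<^sub>v v))"
  hence i: "i < n" using A by simp
  have "row (a \<cdot>\<^sub>m A) i = a \<cdot>\<^sub>v row A i" using i A by (intro eq_vecI) auto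
  thus "((a \<cdot>\<^sub>m A) *\<^sub>v v) $ i = (a \<cdot>\<^sub>v (A *\<^sub>v v)) $ i" using i A v by simp
qed (use A in simp)

definition mat_range :: "'a::semiring_0 mat \<Rightarrow> 'a vec set" where
  "mat_range A = (\<lambda>v. A *\<^sub>v v) ` carrier_vec (dim_col A)"

lemma mat_range_smult:
  fixes A :: "real mat"
  assumes A: "A \<in> carrier_mat n m" and c: "c \<noteq> 0"
  shows "mat_range (c \<cdot>\<^sub>m A) = mat_range A"
proof -
  have "mat_range (c \<cdot>\<^sub>m A) = (\<lambda>v. A *\<^sub>v (c \<cdot>\<^sub>v v)) ` carrier_vec m"
    unfolding mat_range_def using A by (intro image_cong) (simp_all add: mult_mat_vec smult_mat_mult_vec)
  also have "\<dots> = mat_range A"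
    unfolding mat_range_def
  proof (intro equalityI image_subsetI)
    fix v :: "real vec" assume v: "v \<in> carrier_vec (dim_col A)"
    have "A *\<^sub>v v = A *\<^sub>v (c \<cdot>\<^sub>v ((1 / c) \<cdot>\<^sub>v v))" using c by (simp add: smult_smult_assoc)
    moreover have "(1 / c) \<cdot>\<^sub>v v \<in> carrier_vec m" using v A by simp
    ultimately show "A *\<^sub>v v \<in> (\<lambda>v. A *\<^sub>v (c \<cdot>\<^sub>v v)) ` carrier_vec m" by blast
  next
    fix v :: "real vec" assume "v \<in> carrier_vec m"
    hence "c \<cdot>\<^sub>v v \<in> carrier_vec (dim_col A)" using A by simp
    thus "A *\<^sub>v (c \<cdot>\<^sub>v v) \<in> (\<lambda>v. A *\<^sub>v v) ` carrier_vec (dim_col A)" by blast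
  qed
  finally show ?thesis .
qed

lemma mult_add_smult_mat:
  fixes C P Q :: "real mat"
  assumes "C \<in> carrier_mat nr n" "P \<in> carrier_mat n nc" "Q \<in> carrier_mat n nc"
  shows "C * (a \<cdot>\<^sub>m P + b \<cdot>\<^sub>m Q) = a \<cdot>\<^sub>m (C * P) + b \<cdot>\<^sub>m (C * Q)"
  using assms mult_add_distrib_mat[of C nr n "a \<cdot>\<^sub>m P" nc "b \<cdot>\<^sub>m Q"] mult_smult_distrib[of C nr n]
  by simp

lemma add_smult_mult_mat:
  fixes C P Q :: "real mat"
  assumes "P \<in> carrier_mat nr n" "Q \<in> carrier_mat nr n" "C \<in> carrier_mat n nc"
  shows "(a \<cdot>\<^sub>m P + b \<cdot>\<^sub>m Q) * C = a \<cdot>\<^sub>m (P * C) + b \<cdot>\<^sub>m (Q * C)"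
  using assms add_mult_distrib_mat[of "a \<cdot>\<^sub>m P" nr n "b \<cdot>\<^sub>m Q" C nc] mult_smult_assoc_mat[of _ nr n C nc]
  by simp

lemma conj_smult_add:
  fixes J D M1 M2 :: "real mat"
  assumes J: "J \<in> carrier_mat n n" and D: "D \<in> carrier_mat n n"
    and M: "M1 \<in> carrier_mat n n" "M2 \<in> carrier_mat n n"
  shows "J * D * (a \<cdot>\<^sub>m M1 + b \<cdot>\<^sub>m M2) * D * J = a \<cdot>\<^sub>m (J * D * M1 * D * J) + b \<cdot>\<^sub>m (J * D * M2 * D * J)"
proof -
  have JD: "J * D \<in> carrier_mat n n" using J D by simp
  have "J * D * (a \<cdot>\<^sub>m M1 + b \<cdot>\<^sub>m M2) * D * J = (a \<cdot>\<^sub>m (J * D * M1) + b \<cdot>\<^sub>m (J * D * M2)) * D * J"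
    by (simp only: mult_add_smult_mat[OF JD M])
  also have "\<dots> = (a \<cdot>\<^sub>m (J * D * M1 * D) + b \<cdot>\<^sub>m (J * D * M2 * D)) * J"
    using JD M D by (subst add_smult_mult_mat[of _ n n _ D n]) auto
  also have "\<dots> = a \<cdot>\<^sub>m (J * D * M1 * D * J) + b \<cdot>\<^sub>m (J * D * M2 * D * J)"
    using JD M D J by (intro add_smult_mult_mat[of _ n n _ J n]) auto
  finally show ?thesis .
qed
lemma assoc_mult_mat_vec5:
  fixes A B C D E :: "real mat"
  assumes "A \<in> carrier_mat n n" "B \<in> carrier_mat n n" "C \<in> carrier_mat n n"
    "D \<in> carrier_mat n n" "E \<in> carrier_mat n n" "v \<in> carrier_vec n"
  shows "(A * B * C * D * E) *\<^sub>v v = A *\<^sub>v (B *\<^sub>v (C *\<^sub>v (D *\<^sub>v (E *\<^sub>v v))))"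
proof -
  have "(A * B * C * D * E) *\<^sub>v v = (A * B * C * D) *\<^sub>v (E *\<^sub>v v)"
    by (rule assoc_mult_mat_vec[of _ n n]) (use assms in auto)
  also have "\<dots> = (A * B * C) *\<^sub>v (D *\<^sub>v (E *\<^sub>v v))"
    by (rule assoc_mult_mat_vec[of _ n n]) (use assms in auto)
  also have "\<dots> = (A * B) *\<^sub>v (C *\<^sub>v (D *\<^sub>v (E *\<^sub>v v)))"
    by (rule assoc_mult_mat_vec[of _ n n]) (use assms in auto)
  also have "\<dots> = A *\<^sub>v (B *\<^sub>v (C *\<^sub>v (D *\<^sub>v (E *\<^sub>v v))))"
    by (rule assoc_mult_mat_vec[of _ n n]) (use assms in auto)
  finally show ?thesis .
qed

lemma cSUP_less_cSUP_scaled: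
  fixes f g :: "'a \<Rightarrow> real"
  assumes bdd: "bdd_above (g ` T)" and t0: "t0 \<in> T" "0 < f t0" and r: "1 < r"
    and le: "\<And>t. t \<in> T \<Longrightarrow> r * f t \<le> g t"
  shows "(SUP t\<in>T. f t) < (SUP t\<in>T. g t)"
proof -
  have f_le: "f t \<le> (SUP t\<in>T. g t) / r" if "t \<in> T" for t
    using le[OF that] cSUP_upper[OF that bdd] r by (simp add: field_simps)
  hence "bdd_above (f ` T)" by (intro bdd_aboveI2) auto
  hence "0 < (SUP t\<in>T. f t)" using cSUP_upper[OF t0(1)] t0(2) by fastforce
  moreover have "(SUP t\<in>T. f t) \<le> (SUP t\<in>T. g t) / r" using t0(1) f_le by (intro cSUP_least) auto
  ultimately have "(SUP t\<in>T. f t) < r * (SUP t\<in>T. f t)" "r * (SUP t\<in>T. f t) \<le> (SUP t\<in>T. g t)"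
    using r by (simp_all add: field_simps)
  thus ?thesis by linarith
qed

lemma Min_offdiagonal_strict_mono:
  fixes f g :: "nat \<Rightarrow> nat \<Rightarrow> real"
  assumes K: "2 \<le> K" and less: "\<And>k l. k < K \<Longrightarrow> l < K \<Longrightarrow> k \<noteq> l \<Longrightarrow> f k l < g k l"
  shows "Min {f k l | k l. k < K \<and> l < K \<and> k \<noteq> l} < Min {g k l | k l. k < K \<and> l < K \<and> k \<noteq> l}"
proof -
  have fin: "finite {h k l | k l. k < K \<and> l < K \<and> k \<noteq> l}" for h :: "nat \<Rightarrow> nat \<Rightarrow> real"
  proof (rule finite_subset)
    show "{h k l | k l. k < K \<and> l < K \<and> k \<noteq> l} \<subseteq> (\<lambda>(k, l). h k l) ` ({..<K} \<times> {..<K})" by force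
  qed simp
  have "g 0 1 \<in> {g k l | k l. k < K \<and> l < K \<and> k \<noteq> l}" using K by force
  hence "Min {g k l | k l. k < K \<and> l < K \<and> k \<noteq> l} \<in> {g k l | k l. k < K \<and> l < K \<and> k \<noteq> l}"
    using fin[of g] by (intro Min_in) blast+
  then obtain k l where kl: "k < K" "l < K" "k \<noteq> l"
    and min: "Min {g k l | k l. k < K \<and> l < K \<and> k \<noteq> l} = g k l" by blast
  have "Min {f k l | k l. k < K \<and> l < K \<and> k \<noteq> l} \<le> f k l"
    using fin[of f] kl by (intro Min_le) blast+
  thus ?thesis using less[OF kl] min by simp
qed

section \<open>Spectral decomposition of real symmetric matrices\<close>

lemma complex_eigenvector_exists:
  fixes A :: "real mat"
  assumes A: "A \<in> carrier_mat n n" and n: "n > 0"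
  obtains z v where "v \<in> carrier_vec n" "v \<noteq> 0\<^sub>v n" "map_mat complex_of_real A *\<^sub>v v = z \<cdot>\<^sub>v v"
proof -
  let ?A = "map_mat complex_of_real A"
  have Ac: "?A \<in> carrier_mat n n" using A by auto
  have "degree (char_poly ?A) = n" using degree_monic_char_poly[OF Ac] by auto
  hence "\<not> constant (poly (char_poly ?A))" using n constant_degree[of "char_poly ?A"] by auto
  then obtain z where "poly (char_poly ?A) z = 0" using fundamental_theorem_of_algebra by blast
  hence "eigenvalue ?A z" using eigenvalue_root_char_poly[OF Ac] by auto
  thus thesis using that Ac unfolding eigenvalue_def eigenvector_def by auto
qed

lemma map_mat_complex_mult_vec_index:
  fixes A :: "real mat"
  assumes "A \<in> carrier_mat n n" "v \<in> carrier_vec n" "map_mat complex_of_real A *\<^sub>v v = z \<cdot>\<^sub>v v" "i < n"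
  shows "(\<Sum>j<n. complex_of_real (A $$ (i, j)) * v $ j) = z * v $ i"
proof -
  have "(map_mat complex_of_real A *\<^sub>v v) $ i = z * v $ i" using assms by simp
  thus ?thesis using assms by (simp add: mult_mat_vec_def scalar_prod_def atLeast0LessThan)
qed

text \<open>The Hermitian form \<open>v\<^sup>* A v = z v\<^sup>* v\<close> is real.\<close>

lemma symmetric_mat_complex_eigenvalue_real:
  fixes A :: "real mat"
  assumes A: "A \<in> carrier_mat n n" and sym: "transpose_mat A = A"
    and v: "v \<in> carrier_vec n" "v \<noteq> 0\<^sub>v n" and ev: "map_mat complex_of_real A *\<^sub>v v = z \<cdot>\<^sub>v v"
  shows "cnj z = z"
proof -
  have symA: "\<And>i j. i < n \<Longrightarrow> j < n \<Longrightarrow> A $$ (i, j) = A $$ (j, i)"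
    using sym A by (metis carrier_matD index_transpose_mat(1))
  define s where "s = (\<Sum>i<n. cnj (v $ i) * (\<Sum>j<n. complex_of_real (A $$ (i, j)) * v $ j))"
  define N where "N = (\<Sum>i<n. cnj (v $ i) * v $ i)"
  have sN: "s = z * N"
    unfolding s_def N_def using map_mat_complex_mult_vec_index[OF A v(1) ev]
    by (simp add: sum_distrib_left mult_ac)
  have "cnj s = (\<Sum>i<n. \<Sum>j<n. v $ i * complex_of_real (A $$ (i, j)) * cnj (v $ j))"
    unfolding s_def by (simp add: sum_distrib_left mult_ac)
  also have "\<dots> = (\<Sum>j<n. \<Sum>i<n. v $ i * complex_of_real (A $$ (i, j)) * cnj (v $ j))"
    by (rule sum.swap)
  also have "\<dots> = s" unfolding s_def
    by (auto simp: sum_distrib_left mult_ac symA intro!: sum.cong)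
  finally have s_real: "cnj s = s" .
  have N_eq: "N = complex_of_real (\<Sum>i<n. (cmod (v $ i))\<^sup>2)"
    unfolding N_def of_real_sum by (intro sum.cong) (auto simp: complex_norm_square[symmetric] mult.commute)
  obtain i where i: "i < n" "v $ i \<noteq> 0" using v by (metis eq_vecI carrier_vecD index_zero_vec)
  have "(\<Sum>i<n. (cmod (v $ i))\<^sup>2) > 0" by (rule sum_pos2[of _ i]) (use i in auto)
  hence "N \<noteq> 0" unfolding N_eq by (metis less_irrefl of_real_eq_0_iff)
  moreover have "cnj z * N = z * N" using sN s_real N_eq by (metis complex_cnj_mult complex_cnj_complex_of_real)
  ultimately show "cnj z = z" by simp
qed

lemma symmetric_mat_real_eigenvector:
  fixes A :: "real mat"
  assumes A: "A \<in> carrier_mat n n" and n: "n > 0" and sym: "transpose_mat A = A"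
  shows "\<exists>r w. w \<in> carrier_vec n \<and> w \<noteq> 0\<^sub>v n \<and> A *\<^sub>v w = r \<cdot>\<^sub>v w"
proof -
  obtain z v where v: "v \<in> carrier_vec n" "v \<noteq> 0\<^sub>v n" and ev: "map_mat complex_of_real A *\<^sub>v v = z \<cdot>\<^sub>v v"
    using complex_eigenvector_exists[OF A n] by blast
  obtain r where zr: "z = complex_of_real r"
    using symmetric_mat_complex_eigenvalue_real[OF A sym v ev] by (metis Reals_cnj_iff Reals_cases)
  note evi = map_mat_complex_mult_vec_index[OF A v(1) ev]
  define a where "a = vec n (\<lambda>i. Re (v $ i))"
  define b where "b = vec n (\<lambda>i. Im (v $ i))"
  have "A *\<^sub>v a = r \<cdot>\<^sub>v a"
  proof (rule eq_vecI)
    fix i assume "i < dim_vec (r \<cdot>\<^sub>v a)"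
    hence i: "i < n" unfolding a_def by simp
    have "Re (\<Sum>j<n. complex_of_real (A $$ (i, j)) * v $ j) = Re (z * v $ i)" using evi[OF i] by simp
    thus "(A *\<^sub>v a) $ i = (r \<cdot>\<^sub>v a) $ i" using i A zr
      by (simp add: a_def mult_mat_vec_def scalar_prod_def atLeast0LessThan Re_sum)
  qed (use A a_def in auto)
  moreover have "A *\<^sub>v b = r \<cdot>\<^sub>v b"
  proof (rule eq_vecI)
    fix i assume "i < dim_vec (r \<cdot>\<^sub>v b)"
    hence i: "i < n" unfolding b_def by simp
    have "Im (\<Sum>j<n. complex_of_real (A $$ (i, j)) * v $ j) = Im (z * v $ i)" using evi[OF i] by simp
    thus "(A *\<^sub>v b) $ i = (r \<cdot>\<^sub>v b) $ i" using i A zr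
      by (simp add: b_def mult_mat_vec_def scalar_prod_def atLeast0LessThan Im_sum)
  qed (use A b_def in auto)
  moreover have "a \<noteq> 0\<^sub>v n \<or> b \<noteq> 0\<^sub>v n"
  proof (rule ccontr)
    obtain i where i: "i < n" "v $ i \<noteq> 0" using v by (metis eq_vecI carrier_vecD index_zero_vec)
    assume "\<not> ?thesis"
    hence "a $ i = 0" "b $ i = 0" using i by auto
    thus False using i unfolding a_def b_def by (simp add: complex_eq_iff)
  qed
  ultimately show ?thesis using a_def b_def by (metis vec_carrier)
qed

definition reflection_mat :: "nat \<Rightarrow> real vec \<Rightarrow> real mat" where
  "reflection_mat n w = mat n n (\<lambda>(i,j). (if i = j then 1 else 0) - 2 / (w \<bullet> w) * w $ i * w $ j)"

lemma reflection_mat_carrier[simp]: "reflection_mat n w \<in> carrier_mat n n"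
  by (simp add: reflection_mat_def)

lemma symmetric_reflection_mat: "transpose_mat (reflection_mat n w) = reflection_mat n w"
  unfolding reflection_mat_def by (rule eq_matI) auto

lemma reflection_mat_mult_vec:
  assumes "w \<in> carrier_vec n" "x \<in> carrier_vec n"
  shows "reflection_mat n w *\<^sub>v x = x - (2 / (w \<bullet> w) * (w \<bullet> x)) \<cdot>\<^sub>v w"
proof (rule eq_vecI)
  fix i assume "i < dim_vec (x - (2 / (w \<bullet> w) * (w \<bullet> x)) \<cdot>\<^sub>v w)"
  hence i: "i < n" using assms by simp
  define a where "a = 2 / (w \<bullet> w)"
  have "(reflection_mat n w *\<^sub>v x) $ i = (\<Sum>j\<in>{0..<n}. ((if i = j then 1 else 0) - a * w $ i * w $ j) * x $ j)"
    using i assms by (simp add: reflection_mat_def scalar_prod_def a_def)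
  also have "\<dots> = (\<Sum>j\<in>{0..<n}. (if i = j then x $ j else 0) - a * w $ i * (w $ j * x $ j))"
    by (rule sum.cong) (auto simp: algebra_simps)
  also have "\<dots> = x $ i - a * w $ i * (w \<bullet> x)"
    using i assms by (simp add: sum_subtractf sum_distrib_left scalar_prod_def)
  finally show "(reflection_mat n w *\<^sub>v x) $ i = (x - (2 / (w \<bullet> w) * (w \<bullet> x)) \<cdot>\<^sub>v w) $ i"
    using i assms by (simp add: a_def)
qed (use assms in \<open>auto simp: reflection_mat_def\<close>)

lemma reflection_mat_fixes_orthogonal:
  assumes "w \<in> carrier_vec n" "x \<in> carrier_vec n" "w \<bullet> x = 0"
  shows "reflection_mat n w *\<^sub>v x = x"
  using assms by (simp add: reflection_mat_mult_vec) (rule eq_vecI; simp)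

lemma reflection_mat_exchange:
  assumes a: "a \<in> carrier_vec n" and b: "b \<in> carrier_vec n" and ab: "a \<noteq> b" and len: "a \<bullet> a = b \<bullet> b"
  shows "reflection_mat n (a - b) *\<^sub>v b = a"
proof -
  let ?w = "a - b"
  have w: "?w \<in> carrier_vec n" using a b by simp
  have wb: "?w \<bullet> b = a \<bullet> b - b \<bullet> b" using a b by (simp add: minus_scalar_prod_distrib)
  have "?w \<bullet> ?w = a \<bullet> a - a \<bullet> b - (b \<bullet> a - b \<bullet> b)"
    using a b by (simp add: minus_scalar_prod_distrib scalar_prod_minus_distrib)
  hence ww: "?w \<bullet> ?w = - 2 * (?w \<bullet> b)" using wb len comm_scalar_prod[OF a b] by simp
  have "?w \<noteq> 0\<^sub>v n" using ab a b minus_vec_eq_zero_iff by blast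
  hence "?w \<bullet> ?w \<noteq> 0" using scalar_prod_self_pos[OF w] by simp
  hence "2 / (?w \<bullet> ?w) * (?w \<bullet> b) = -1" using ww by (simp add: field_simps)
  thus ?thesis using a b by (auto simp: reflection_mat_mult_vec[OF w b])
qed

lemma reflection_mat_involutive:
  assumes w: "w \<in> carrier_vec n" "w \<noteq> 0\<^sub>v n"
  shows "reflection_mat n w * reflection_mat n w = 1\<^sub>m n"
proof (rule eq_mat_by_unit_vecI[of _ n n])
  fix i assume "i < n"
  let ?R = "reflection_mat n w" and ?e = "unit_vec n i"
  have Re: "?R *\<^sub>v ?e \<in> carrier_vec n" by (rule mult_mat_vec_carrier[OF reflection_mat_carrier unit_vec_carrier])
  have ww: "w \<bullet> w \<noteq> 0" using scalar_prod_self_pos[OF w] by simp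
  have Re_eq: "?R *\<^sub>v ?e = ?e - (2 / (w \<bullet> w) * (w \<bullet> ?e)) \<cdot>\<^sub>v w"
    by (rule reflection_mat_mult_vec[OF w(1) unit_vec_carrier])
  have wRe: "w \<bullet> (?R *\<^sub>v ?e) = - (w \<bullet> ?e)"
    using w ww by (simp add: Re_eq scalar_prod_minus_distrib[of w n] field_simps)
  have "?R *\<^sub>v (?R *\<^sub>v ?e) = ?R *\<^sub>v ?e - (2 / (w \<bullet> w) * (w \<bullet> (?R *\<^sub>v ?e))) \<cdot>\<^sub>v w"
    by (rule reflection_mat_mult_vec[OF w(1) Re])
  also have "\<dots> = ?e" unfolding wRe by (subst Re_eq, rule eq_vecI) (use w in auto)
  finally have "?R *\<^sub>v (?R *\<^sub>v ?e) = ?e" .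
  thus "(?R * ?R) *\<^sub>v ?e = 1\<^sub>m n *\<^sub>v ?e"
    by (simp add: assoc_mult_mat_vec[OF reflection_mat_carrier reflection_mat_carrier unit_vec_carrier])
qed (auto intro: mult_carrier_mat[OF reflection_mat_carrier reflection_mat_carrier])

lemma orthogonal_symmetric_mat_to_unit_vec:
  fixes u :: "real vec"
  assumes u: "u \<in> carrier_vec n" "u \<bullet> u = 1" and k: "k < n"
  obtains H where "H \<in> carrier_mat n n" "transpose_mat H = H" "H * H = 1\<^sub>m n" "H *\<^sub>v unit_vec n k = u"
    "\<And>i. i < n \<Longrightarrow> i \<noteq> k \<Longrightarrow> u $ i = 0 \<Longrightarrow> H *\<^sub>v unit_vec n i = unit_vec n i"
proof (cases "u = unit_vec n k")
  case True
  thus ?thesis using that[of "1\<^sub>m n"] by auto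
next
  case False
  let ?w = "u - unit_vec n k"
  have w: "?w \<in> carrier_vec n" using u by simp
  have "?w \<noteq> 0\<^sub>v n" using False u minus_vec_eq_zero_iff unit_vec_carrier by blast
  moreover have "reflection_mat n ?w *\<^sub>v unit_vec n k = u"
    using reflection_mat_exchange[OF u(1) unit_vec_carrier False] u k by simp
  moreover have "reflection_mat n ?w *\<^sub>v unit_vec n i = unit_vec n i"
    if "i < n" "i \<noteq> k" "u $ i = 0" for i
    using that u k by (intro reflection_mat_fixes_orthogonal) (auto simp: minus_scalar_prod_distrib)
  ultimately show ?thesis
    using that[of "reflection_mat n ?w"] w symmetric_reflection_mat reflection_mat_involutive by auto
qed

lemma eigenvector_zero_extension:
  fixes A :: "real mat"
  assumes A: "A \<in> carrier_mat n n" and k: "k \<le> n"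
    and prefix: "\<And>i j. i < k \<Longrightarrow> j < n \<Longrightarrow> j \<noteq> i \<Longrightarrow> A $$ (i, j) = 0"
    and u: "u \<in> carrier_vec (n - k)"
    and eu: "mat (n - k) (n - k) (\<lambda>(i, j). A $$ (i + k, j + k)) *\<^sub>v u = r \<cdot>\<^sub>v u"
  defines "u0 \<equiv> vec n (\<lambda>i. if i < k then 0 else u $ (i - k))"
  shows "A *\<^sub>v u0 = r \<cdot>\<^sub>v u0"
proof (rule eq_vecI)
  let ?m = "n - k"
  fix i assume "i < dim_vec (r \<cdot>\<^sub>v u0)"
  hence i: "i < n" unfolding u0_def by simp
  have u0: "u0 \<in> carrier_vec n" unfolding u0_def by simp
  have "(A *\<^sub>v u0) $ i = (\<Sum>j\<in>{0..<k}. A $$ (i, j) * u0 $ j) + (\<Sum>j\<in>{k..<n}. A $$ (i, j) * u0 $ j)"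
    using i A k u0 by (simp add: scalar_prod_def sum.atLeastLessThan_concat)
  also have "(\<Sum>j\<in>{0..<k}. A $$ (i, j) * u0 $ j) = 0"
    using k by (intro sum.neutral) (auto simp: u0_def)
  also have "(\<Sum>j\<in>{k..<n}. A $$ (i, j) * u0 $ j) = (\<Sum>j\<in>{0+k..<?m+k}. A $$ (i, j) * u0 $ j)"
    using k by simp
  also have "\<dots> = (\<Sum>j\<in>{0..<?m}. A $$ (i, j + k) * u $ j)"
    unfolding sum.shift_bounds_nat_ivl by (intro sum.cong) (auto simp: u0_def)
  finally have s: "(A *\<^sub>v u0) $ i = (\<Sum>j\<in>{0..<?m}. A $$ (i, j + k) * u $ j)" by simp
  show "(A *\<^sub>v u0) $ i = (r \<cdot>\<^sub>v u0) $ i"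
  proof (cases "i < k")
    case True
    thus ?thesis using s i prefix by (simp add: u0_def)
  next
    case False
    hence ik: "i - k < ?m" using i by simp
    have "(mat ?m ?m (\<lambda>(i, j). A $$ (i + k, j + k)) *\<^sub>v u) $ (i - k) = (\<Sum>j\<in>{0..<?m}. A $$ (i, j + k) * u $ j)"
      using ik u False by (simp add: scalar_prod_def)
    thus ?thesis using s eu ik u False i by (simp add: u0_def)
  qed
qed (use A in \<open>simp add: u0_def\<close>)

lemma symmetric_mat_unit_eigenvector_vanishing_prefix:
  fixes A :: "real mat"
  assumes A: "A \<in> carrier_mat n n" and sym: "transpose_mat A = A" and k: "k < n"
    and prefix: "\<And>i j. i < k \<Longrightarrow> j < n \<Longrightarrow> j \<noteq> i \<Longrightarrow> A $$ (i, j) = 0"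
  obtains r u where "u \<in> carrier_vec n" "u \<bullet> u = 1" "A *\<^sub>v u = r \<cdot>\<^sub>v u" "\<And>i. i < k \<Longrightarrow> u $ i = 0"
proof -
  define m where "m = n - k"
  have m: "m > 0" unfolding m_def using k by auto
  have symA: "\<And>i j. i < n \<Longrightarrow> j < n \<Longrightarrow> A $$ (i, j) = A $$ (j, i)"
    using sym A by (metis carrier_matD index_transpose_mat(1))
  define A2 where "A2 = mat m m (\<lambda>(i, j). A $$ (i + k, j + k))"
  have A2: "A2 \<in> carrier_mat m m" "transpose_mat A2 = A2"
    unfolding A2_def by (auto intro!: eq_matI simp: m_def symA)
  obtain r u2 where u2: "u2 \<in> carrier_vec m" "u2 \<noteq> 0\<^sub>v m" and eu2: "A2 *\<^sub>v u2 = r \<cdot>\<^sub>v u2"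
    using symmetric_mat_real_eigenvector[OF A2(1) m A2(2)] by blast
  define u0 where "u0 = vec n (\<lambda>i. if i < k then 0 else u2 $ (i - k))"
  have u0: "u0 \<in> carrier_vec n" unfolding u0_def by auto
  have eu0: "A *\<^sub>v u0 = r \<cdot>\<^sub>v u0"
    unfolding u0_def using u2(1) eu2 k prefix unfolding m_def A2_def
    by (intro eigenvector_zero_extension[OF A]) auto
  obtain i where "i < m" "u2 $ i \<noteq> 0" using u2 by (metis eq_vecI carrier_vecD index_zero_vec)
  hence "u0 $ (i + k) \<noteq> 0" unfolding u0_def m_def by simp
  hence "u0 \<noteq> 0\<^sub>v n" using \<open>i < m\<close> unfolding m_def by (metis add.commute index_zero_vec(1) less_diff_conv)
  hence s: "u0 \<bullet> u0 > 0" by (rule scalar_prod_self_pos[OF u0])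
  define u where "u = (1 / sqrt (u0 \<bullet> u0)) \<cdot>\<^sub>v u0"
  show thesis
  proof (rule that)
    show "u \<in> carrier_vec n" unfolding u_def using u0 by simp
    show "u \<bullet> u = 1" unfolding u_def using u0 s by (simp add: power2_eq_square[symmetric])
    show "A *\<^sub>v u = r \<cdot>\<^sub>v u" unfolding u_def using mult_mat_vec[OF A u0] eu0
      by (auto simp: smult_smult_assoc mult.commute)
    show "u $ i = 0" if "i < k" for i unfolding u_def u0_def using that k by simp
  qed
qed

lemma conj_involution_eigen_columns:
  fixes A H :: "real mat"
  assumes A: "A \<in> carrier_mat n n" and H: "H \<in> carrier_mat n n" "H * H = 1\<^sub>m n"
    and Hk: "H *\<^sub>v unit_vec n k = u" and u: "u \<in> carrier_vec n" and eu: "A *\<^sub>v u = r \<cdot>\<^sub>v u"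
    and Hi: "\<And>i. i < k \<Longrightarrow> H *\<^sub>v unit_vec n i = unit_vec n i"
    and cols: "\<forall>i<k. \<exists>c. A *\<^sub>v unit_vec n i = c \<cdot>\<^sub>v unit_vec n i"
  shows "\<forall>i<Suc k. \<exists>c. (H * A * H) *\<^sub>v unit_vec n i = c \<cdot>\<^sub>v unit_vec n i"
proof (intro allI impI)
  fix i assume i: "i < Suc k"
  have HAH: "(H * A * H) *\<^sub>v x = H *\<^sub>v (A *\<^sub>v (H *\<^sub>v x))" if "x \<in> carrier_vec n" for x
    using H A that by (simp add: assoc_mult_mat_vec[of _ n n _ n])
  show "\<exists>c. (H * A * H) *\<^sub>v unit_vec n i = c \<cdot>\<^sub>v unit_vec n i"
  proof (cases "i < k")
    case True
    obtain c where c: "A *\<^sub>v unit_vec n i = c \<cdot>\<^sub>v unit_vec n i" using cols True by auto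
    show ?thesis using HAH[OF unit_vec_carrier] Hi[OF True] c mult_mat_vec[OF H(1) unit_vec_carrier] by auto
  next
    case False
    hence ik: "i = k" using i by simp
    have "H *\<^sub>v u = unit_vec n k" using H Hk by (metis assoc_mult_mat_vec one_mult_mat_vec unit_vec_carrier)
    thus ?thesis using HAH[OF unit_vec_carrier] Hk eu mult_mat_vec[OF H(1) u] ik by auto
  qed
qed

lemma symmetric_mat_partial_diagonalization:
  fixes A :: "real mat"
  assumes A: "A \<in> carrier_mat n n" and sym: "transpose_mat A = A"
  shows "k \<le> n \<Longrightarrow> \<exists>V \<in> carrier_mat n n. transpose_mat V * V = 1\<^sub>m n \<and>
     (\<forall>i<k. \<exists>c. (transpose_mat V * A * V) *\<^sub>v unit_vec n i = c \<cdot>\<^sub>v unit_vec n i)"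
proof (induction k)
  case 0
  show ?case by (intro bexI[of _ "1\<^sub>m n"]) auto
next
  case (Suc k)
  hence k: "k < n" by auto
  then obtain V where V: "V \<in> carrier_mat n n" and VV: "transpose_mat V * V = 1\<^sub>m n"
    and cols: "\<forall>i<k. \<exists>c. (transpose_mat V * A * V) *\<^sub>v unit_vec n i = c \<cdot>\<^sub>v unit_vec n i"
    using Suc by auto
  define A' where "A' = transpose_mat V * A * V"
  have A': "A' \<in> carrier_mat n n" unfolding A'_def using A V by auto
  have symA': "transpose_mat A' = A'"
    unfolding A'_def by (rule symmetric_mat_transpose_conj[OF A V sym])
  have prefix: "A' $$ (i, j) = 0" if ij: "i < k" "j < n" "j \<noteq> i" for i j
  proof -
    obtain c where c: "A' *\<^sub>v unit_vec n i = c \<cdot>\<^sub>v unit_vec n i" using cols ij unfolding A'_def by auto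
    have "A' $$ (j, i) = 0" using mult_unit_vec_index[OF A', of i j] ij k c by simp
    thus ?thesis using symA' A' ij k by (metis carrier_matD index_transpose_mat(1) less_trans)
  qed
  obtain r u where u: "u \<in> carrier_vec n" "u \<bullet> u = 1" and eu: "A' *\<^sub>v u = r \<cdot>\<^sub>v u"
    and u_prefix: "\<And>i. i < k \<Longrightarrow> u $ i = 0"
    using symmetric_mat_unit_eigenvector_vanishing_prefix[OF A' symA' k prefix] by blast
  txt \<open>Conjugating by a reflection sending \<open>e\<^sub>k\<close> to \<open>u\<close> diagonalizes column \<open>k\<close>
    and leaves the first \<open>k\<close> columns alone.\<close>
  obtain H where H: "H \<in> carrier_mat n n" "transpose_mat H = H" "H * H = 1\<^sub>m n"
    and Hk: "H *\<^sub>v unit_vec n k = u"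
    and Hi: "\<And>i. i < n \<Longrightarrow> i \<noteq> k \<Longrightarrow> u $ i = 0 \<Longrightarrow> H *\<^sub>v unit_vec n i = unit_vec n i"
    using orthogonal_symmetric_mat_to_unit_vec[OF u k] by blast
  define V' where "V' = V * H"
  have V': "V' \<in> carrier_mat n n" unfolding V'_def using V H by auto
  have tV': "transpose_mat V' = H * transpose_mat V"
    unfolding V'_def using transpose_mult[OF V H(1)] H by simp
  have "transpose_mat V' * V' = H * (transpose_mat V * V) * H"
    unfolding tV' using V H by (simp add: V'_def assoc_mult_mat[of _ n n _ n _ n])
  hence V'V': "transpose_mat V' * V' = 1\<^sub>m n" using VV H by simp
  have conj: "transpose_mat V' * A * V' = H * A' * H"
    unfolding tV' using V H A by (simp add: V'_def A'_def assoc_mult_mat[of _ n n _ n _ n])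
  have "\<forall>i<Suc k. \<exists>c. (H * A' * H) *\<^sub>v unit_vec n i = c \<cdot>\<^sub>v unit_vec n i"
    using cols Hi u_prefix k unfolding A'_def[symmetric]
    by (intro conj_involution_eigen_columns[OF A' H(1,3) Hk u(1) eu]) auto
  thus ?case using V' V'V' conj by auto
qed

lemma symmetric_mat_orthogonal_diagonalization:
  fixes A :: "real mat"
  assumes A: "A \<in> carrier_mat n n" and sym: "transpose_mat A = A"
  obtains V lam where "V \<in> carrier_mat n n" "transpose_mat V * V = 1\<^sub>m n"
    "A = V * mat_diag n lam * transpose_mat V"
proof -
  obtain V where V: "V \<in> carrier_mat n n" and VV: "transpose_mat V * V = 1\<^sub>m n"
    and cols: "\<forall>i<n. \<exists>c. (transpose_mat V * A * V) *\<^sub>v unit_vec n i = c \<cdot>\<^sub>v unit_vec n i"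
    using symmetric_mat_partial_diagonalization[OF A sym, of n] by auto
  define D where "D = transpose_mat V * A * V"
  have Dc: "D \<in> carrier_mat n n" unfolding D_def using A V by auto
  have VV': "V * transpose_mat V = 1\<^sub>m n"
    using mat_mult_left_right_inverse[of "transpose_mat V" n V] V VV by auto
  have "D = mat_diag n (\<lambda>i. D $$ (i, i))"
  proof (rule eq_mat_by_unit_vecI[OF Dc mat_diag_dim])
    fix i assume i: "i < n"
    obtain c where c: "D *\<^sub>v unit_vec n i = c \<cdot>\<^sub>v unit_vec n i" using cols i unfolding D_def by auto
    have "D $$ (i, i) = c" using mult_unit_vec_index[OF Dc i i] c i by simp
    thus "D *\<^sub>v unit_vec n i = mat_diag n (\<lambda>i. D $$ (i, i)) *\<^sub>v unit_vec n i"
      unfolding c mat_diag_mult_vec[OF unit_vec_carrier] by (intro eq_vecI) (auto simp: unit_vec_def)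
  qed
  moreover have "V * D * transpose_mat V = (V * transpose_mat V) * A * (V * transpose_mat V)"
    unfolding D_def using V A by (simp add: assoc_mult_mat[of _ n n _ n _ n])
  hence "A = V * D * transpose_mat V" using VV' A by simp
  ultimately show thesis using that V VV by metis
qed

lemma sum_lessThan_reindex_support:
  fixes f :: "nat \<Rightarrow> 'a::comm_monoid_add"
  assumes "distinct idx" "set idx \<subseteq> {..<K}" "\<And>i. i < K \<Longrightarrow> i \<notin> set idx \<Longrightarrow> f i = 0"
  shows "(\<Sum>i<K. f i) = (\<Sum>j<length idx. f (idx ! j))"
proof -
  have "(\<Sum>i<K. f i) = (\<Sum>i\<in>set idx. f i)" using assms by (intro sum.mono_neutral_right) auto
  also have "\<dots> = (\<Sum>j<length idx. f (idx ! j))"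
    by (rule sum.reindex_bij_betw[symmetric], rule bij_betw_nth) (use assms in auto)
  finally show ?thesis .
qed

lemma select_cols_orthonormal:
  fixes V :: "real mat"
  assumes V: "V \<in> carrier_mat K K" and VV: "transpose_mat V * V = 1\<^sub>m K"
    and idx: "distinct idx" "set idx \<subseteq> {..<K}"
  defines "U \<equiv> mat K (length idx) (\<lambda>(a, j). V $$ (a, idx ! j))"
  shows "transpose_mat U * U = 1\<^sub>m (length idx)"
proof (rule eq_matI)
  fix i j assume "i < dim_row (1\<^sub>m (length idx) :: real mat)" "j < dim_col (1\<^sub>m (length idx) :: real mat)"
  hence ij: "i < length idx" "j < length idx" by auto
  hence "idx ! i < K" "idx ! j < K" using idx nth_mem by blast+
  hence "(transpose_mat U * U) $$ (i, j) = (transpose_mat V * V) $$ (idx ! i, idx ! j)"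
    using ij V by (simp add: scalar_prod_def U_def)
  thus "(transpose_mat U * U) $$ (i, j) = 1\<^sub>m (length idx) $$ (i, j)"
    unfolding VV using ij idx \<open>idx ! i < K\<close> \<open>idx ! j < K\<close> by (simp add: nth_eq_iff_index_eq)
qed (auto simp: U_def)

lemma spec_decomp_exists:
  fixes B :: "real mat"
  assumes B: "B \<in> carrier_mat K K" and sym: "transpose_mat B = B" and a: "a < K" and Baa: "B $$ (a, a) > 0"
  shows "\<exists>dp dm U S. spec_decomp B dp dm U S"
proof -
  obtain V lam where V: "V \<in> carrier_mat K K" and VV: "transpose_mat V * V = 1\<^sub>m K"
    and BV: "B = V * mat_diag K lam * transpose_mat V"
    using symmetric_mat_orthogonal_diagonalization[OF B sym] by blast
  define ps where "ps = filter (\<lambda>i. lam i > 0) [0..<K]"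
  define ns where "ns = filter (\<lambda>i. lam i < 0) [0..<K]"
  define idx where "idx = ps @ ns"
  define dp where "dp = length ps"
  define dm where "dm = length ns"
  define d where "d = dp + dm"
  have len: "length idx = d" unfolding idx_def d_def dp_def dm_def by simp
  have dist: "distinct idx" unfolding idx_def ps_def ns_def by auto
  have set_idx: "set idx = {i. i < K \<and> lam i \<noteq> 0}" unfolding idx_def ps_def ns_def by auto
  define U where "U = mat K d (\<lambda>(a, j). V $$ (a, idx ! j))"
  define S where "S = mat_diag d (\<lambda>j. lam (idx ! j))"
  have U: "U \<in> carrier_mat K d" unfolding U_def by auto
  have S: "S \<in> carrier_mat d d" "diagonal_mat S" unfolding S_def mat_diag_def diagonal_mat_def by auto
  have S_pos: "S $$ (i, i) > 0" if "i < dp" for i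
    using that nth_mem[of i ps] unfolding S_def mat_diag_def d_def idx_def dp_def ps_def
    by (auto simp: nth_append)
  have S_neg: "S $$ (i, i) < 0" if "dp \<le> i" "i < d" for i
    using that nth_mem[of "i - dp" ns] unfolding S_def mat_diag_def d_def idx_def dp_def dm_def ns_def
    by (auto simp: nth_append)
  have UU: "transpose_mat U * U = 1\<^sub>m d"
    unfolding U_def len[symmetric] using select_cols_orthonormal[OF V VV dist] set_idx by auto
  have entry: "(U * S * transpose_mat U) $$ (a, b) = B $$ (a, b)" if ab: "a < K" "b < K" for a b
  proof -
    have "(U * S * transpose_mat U) $$ (a, b) = (\<Sum>j<d. V $$ (a, idx ! j) * lam (idx ! j) * V $$ (b, idx ! j))"
      unfolding S_def using index_mult_mat_diag_transpose[OF U U ab] ab by (simp add: U_def)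
    also have "\<dots> = (\<Sum>i<K. V $$ (a, i) * lam i * V $$ (b, i))"
      unfolding len[symmetric] by (rule sum_lessThan_reindex_support[OF dist, symmetric]) (auto simp: set_idx)
    also have "\<dots> = B $$ (a, b)" unfolding BV by (rule index_mult_mat_diag_transpose[OF V V ab, symmetric])
    finally show ?thesis .
  qed
  have "B = U * S * transpose_mat U" by (rule eq_matI) (use B U entry in auto)
  moreover have "1 \<le> dp"
  proof (rule ccontr)
    assume "\<not> 1 \<le> dp"
    hence "U $$ (a, j) * S $$ (j, j) * U $$ (a, j) \<le> 0" if "j < d" for j
      using S_neg[of j] that by (simp add: mult.commute mult_nonpos_nonneg mult.left_commute)
    moreover have "S $$ (j, j) = lam (idx ! j)" if "j < d" for j using that by (simp add: S_def mat_diag_def)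
    ultimately have "(\<Sum>j<d. U $$ (a, j) * lam (idx ! j) * U $$ (a, j)) \<le> 0" by (intro sum_nonpos) simp
    hence "(U * S * transpose_mat U) $$ (a, a) \<le> 0"
      unfolding S_def using index_mult_mat_diag_transpose[OF U U a a] by simp
    thus False using entry[OF a a] Baa by simp
  qed
  ultimately have "spec_decomp B dp dm U S"
    unfolding spec_decomp_def using U S S_pos S_neg UU B d_def by auto
  thus ?thesis by blast
qed

section \<open>The embedding \<open>\<nu>\<close>\<close>

lemma Ipm_eq_mat_diag: "Ipm dp dm = mat_diag (dp + dm) (\<lambda>j. if j < dp then 1 else -1)"
  unfolding Ipm_def mat_diag_def by (intro eq_matI) auto

lemma Ipm_carrier[simp]: "Ipm dp dm \<in> carrier_mat (dp + dm) (dp + dm)"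
  and Ipm_dim[simp]: "dim_row (Ipm dp dm) = dp + dm" "dim_col (Ipm dp dm) = dp + dm"
  by (simp_all add: Ipm_def)

lemma Ipm_involutive: "Ipm dp dm * Ipm dp dm = 1\<^sub>m (dp + dm)"
  unfolding Ipm_eq_mat_diag mat_diag_diag by (auto simp: mat_diag_def intro!: eq_matI)

lemma Ipm_mult_Ipm_mult_vec: "v \<in> carrier_vec (dp + dm) \<Longrightarrow> Ipm dp dm *\<^sub>v (Ipm dp dm *\<^sub>v v) = v"
  by (metis Ipm_carrier Ipm_involutive assoc_mult_mat_vec one_mult_mat_vec)

lemma symmetric_Ipm: "transpose_mat (Ipm dp dm) = Ipm dp dm"
  unfolding Ipm_def by (intro eq_matI) auto

context
  fixes B U S :: "real mat" and K dp dm :: nat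
  assumes B: "B \<in> carrier_mat K K" and sd: "spec_decomp B dp dm U S"
begin

lemma spec_decompD:
  "U \<in> carrier_mat K (dp + dm)" "S \<in> carrier_mat (dp + dm) (dp + dm)"
  "transpose_mat U * U = 1\<^sub>m (dp + dm)" "B = U * S * transpose_mat U"
  using sd B unfolding spec_decomp_def by auto

lemma spec_decomp_S_eq: "S = mat_diag (dp + dm) (\<lambda>j. S $$ (j, j))"
  using sd unfolding spec_decomp_def diagonal_mat_def mat_diag_def by (intro eq_matI) auto

lemma spec_decomp_S_nonzero: "j < dp + dm \<Longrightarrow> S $$ (j, j) \<noteq> 0"
  using sd unfolding spec_decomp_def by (metis less_irrefl not_le)

lemma nu_mat_eq: "nu_mat U S = U * mat_diag (dp + dm) (\<lambda>j. sqrt \<bar>S $$ (j, j)\<bar>)"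
  unfolding nu_mat_def mat_diag_def using spec_decompD(2) by (intro arg_cong2[of _ _ _ _ "(*)"] refl eq_matI) auto

lemma nu_mat_carrier: "nu_mat U S \<in> carrier_mat K (dp + dm)"
  unfolding nu_mat_eq using spec_decompD(1) by auto

lemma nu_mat_index: "a < K \<Longrightarrow> j < dp + dm \<Longrightarrow> nu_mat U S $$ (a, j) = U $$ (a, j) * sqrt \<bar>S $$ (j, j)\<bar>"
  unfolding nu_mat_eq using spec_decompD(1) by (simp add: mat_diag_mult_right[of _ K "dp + dm"])

text \<open>The signature matrix absorbs the signs: \<open>|S|\<^sup>1\<^sup>/\<^sup>2 I\<^sub>d\<^sub>+\<^sub>d\<^sub>- |S|\<^sup>1\<^sup>/\<^sup>2 = S\<close>.\<close>

lemma nu_mat_factorization: "B = nu_mat U S * Ipm dp dm * transpose_mat (nu_mat U S)"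
proof (rule eq_matI)
  let ?N = "nu_mat U S" and ?d = "dp + dm"
  fix a b assume "a < dim_row (?N * Ipm dp dm * transpose_mat ?N)" "b < dim_col (?N * Ipm dp dm * transpose_mat ?N)"
  hence ab: "a < K" "b < K" using nu_mat_carrier by auto
  have sign: "sqrt \<bar>S $$ (j, j)\<bar> * sqrt \<bar>S $$ (j, j)\<bar> * (if j < dp then 1 else -1) = S $$ (j, j)"
    if "j < ?d" for j
    using sd that unfolding spec_decomp_def by (cases "j < dp") (auto simp: abs_if dest: spec[of _ j])
  have "(?N * Ipm dp dm * transpose_mat ?N) $$ (a, b) = (\<Sum>j<?d. ?N $$ (a, j) * (if j < dp then 1 else -1) * ?N $$ (b, j))"
    unfolding Ipm_eq_mat_diag by (rule index_mult_mat_diag_transpose[OF nu_mat_carrier nu_mat_carrier ab])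
  also have "\<dots> = (\<Sum>j<?d. U $$ (a, j) * S $$ (j, j) * U $$ (b, j))"
  proof (rule sum.cong[OF refl])
    fix j assume "j \<in> {..<?d}"
    hence j: "j < ?d" by simp
    have "?N $$ (a, j) * (if j < dp then 1 else -1) * ?N $$ (b, j)
      = U $$ (a, j) * U $$ (b, j) * (sqrt \<bar>S $$ (j, j)\<bar> * sqrt \<bar>S $$ (j, j)\<bar> * (if j < dp then 1 else -1))"
      unfolding nu_mat_index[OF ab(1) j] nu_mat_index[OF ab(2) j] by (simp only: mult_ac)
    thus "?N $$ (a, j) * (if j < dp then 1 else -1) * ?N $$ (b, j) = U $$ (a, j) * S $$ (j, j) * U $$ (b, j)"
      unfolding sign[OF j] by (simp only: mult_ac)
  qed
  also have "\<dots> = (U * mat_diag ?d (\<lambda>j. S $$ (j, j)) * transpose_mat U) $$ (a, b)"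
    by (rule index_mult_mat_diag_transpose[OF spec_decompD(1) spec_decompD(1) ab, symmetric])
  also have "\<dots> = B $$ (a, b)" using spec_decompD(4) spec_decomp_S_eq by simp
  finally show "B $$ (a, b) = (?N * Ipm dp dm * transpose_mat ?N) $$ (a, b)" by simp
qed (use B nu_mat_carrier in auto)

lemma nu_mat_mult_vec:
  assumes "w \<in> carrier_vec (dp + dm)"
  shows "nu_mat U S *\<^sub>v w = U *\<^sub>v vec (dp + dm) (\<lambda>j. sqrt \<bar>S $$ (j, j)\<bar> * w $ j)"
  unfolding nu_mat_eq using assms
  by (subst assoc_mult_mat_vec[OF spec_decompD(1) mat_diag_dim]) (simp_all add: mat_diag_mult_vec)

lemma transpose_U_mult_U: "y \<in> carrier_vec (dp + dm) \<Longrightarrow> transpose_mat U *\<^sub>v (U *\<^sub>v y) = y"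
  using spec_decompD(1,3) by (metis assoc_mult_mat_vec carrier_matD(1) carrier_matD(2) carrier_matI
      index_transpose_mat(2,3) one_mult_mat_vec)

lemma nu_mat_injective:
  assumes w: "w \<in> carrier_vec (dp + dm)" and z: "nu_mat U S *\<^sub>v w = 0\<^sub>v K"
  shows "w = 0\<^sub>v (dp + dm)"
proof -
  have "vec (dp + dm) (\<lambda>j. sqrt \<bar>S $$ (j, j)\<bar> * w $ j) = transpose_mat U *\<^sub>v (nu_mat U S *\<^sub>v w)"
    unfolding nu_mat_mult_vec[OF w] by (rule transpose_U_mult_U[symmetric]) simp
  also have "\<dots> = 0\<^sub>v (dp + dm)" unfolding z using spec_decompD(1) by auto
  finally have eq: "vec (dp + dm) (\<lambda>j. sqrt \<bar>S $$ (j, j)\<bar> * w $ j) = 0\<^sub>v (dp + dm)" .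
  show ?thesis
  proof (rule eq_vecI)
    fix j assume "j < dim_vec (0\<^sub>v (dp + dm) :: real vec)"
    hence j: "j < dp + dm" by simp
    have "sqrt \<bar>S $$ (j, j)\<bar> * w $ j = 0" using arg_cong[OF eq, of "\<lambda>v. v $ j"] j by simp
    thus "w $ j = 0\<^sub>v (dp + dm) $ j" using spec_decomp_S_nonzero[OF j] j by simp
  qed (use w in simp)
qed

lemma mat_range_nu_mat: "mat_range (nu_mat U S) = mat_range B"
proof (intro equalityI subsetI)
  let ?d = "dp + dm"
  fix x assume "x \<in> mat_range (nu_mat U S)"
  then obtain w where w: "w \<in> carrier_vec ?d" and x: "x = nu_mat U S *\<^sub>v w"
    unfolding mat_range_def using nu_mat_carrier by auto
  define y where "y = vec ?d (\<lambda>j. sqrt \<bar>S $$ (j, j)\<bar> / S $$ (j, j) * w $ j)"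
  have y: "y \<in> carrier_vec ?d" unfolding y_def by simp
  have "B *\<^sub>v (U *\<^sub>v y) = (U * S) *\<^sub>v (transpose_mat U *\<^sub>v (U *\<^sub>v y))"
    unfolding spec_decompD(4) by (rule assoc_mult_mat_vec) (use spec_decompD(1,2) y in auto)
  also have "\<dots> = U *\<^sub>v (S *\<^sub>v (transpose_mat U *\<^sub>v (U *\<^sub>v y)))"
    by (rule assoc_mult_mat_vec) (use spec_decompD(1,2) y in auto)
  also have "\<dots> = x"
    unfolding transpose_U_mult_U[OF y] x nu_mat_mult_vec[OF w]
    by (subst spec_decomp_S_eq) (auto simp: y_def mat_diag_mult_vec spec_decomp_S_nonzero intro!: arg_cong[where f="(*\<^sub>v) U"] eq_vecI)
  finally show "x \<in> mat_range B" unfolding mat_range_def using B spec_decompD(1) y by force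
next
  fix x assume "x \<in> mat_range B"
  then obtain z where z: "z \<in> carrier_vec K" and x: "x = B *\<^sub>v z"
    unfolding mat_range_def using B by auto
  have "x = nu_mat U S *\<^sub>v (Ipm dp dm *\<^sub>v (transpose_mat (nu_mat U S) *\<^sub>v z))"
    unfolding x using nu_mat_carrier z
    by (subst nu_mat_factorization) (simp add: assoc_mult_mat_vec[of _ K "dp + dm" _ "dp + dm"] assoc_mult_mat_vec[of _ K "dp + dm" _ K])
  moreover have "Ipm dp dm *\<^sub>v (transpose_mat (nu_mat U S) *\<^sub>v z) \<in> carrier_vec (dim_col (nu_mat U S))"
    using nu_mat_carrier z by (auto intro!: mult_mat_vec_carrier[OF Ipm_carrier])
  ultimately show "x \<in> mat_range (nu_mat U S)" unfolding mat_range_def by blast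
qed

end

section \<open>The variational formula\<close>

lemma index_transpose_diag:
  fixes N :: "real mat"
  assumes "N \<in> carrier_mat K d" "i < d" "j < d"
  shows "(transpose_mat N * mat_diag K g * N) $$ (i, j) = (\<Sum>a<K. g a * N $$ (a, i) * N $$ (a, j))"
  using index_mult_mat_diag_transpose[of "transpose_mat N" d K "transpose_mat N" d i j g] assms
  by (simp add: mult_ac)

lemma transpose_diag_smult_add:
  fixes N :: "real mat"
  assumes "N \<in> carrier_mat K d"
  shows "a \<cdot>\<^sub>m (transpose_mat N * mat_diag K f * N) + b \<cdot>\<^sub>m (transpose_mat N * mat_diag K g * N)
    = transpose_mat N * mat_diag K (\<lambda>i. a * f i + b * g i) * N"
  by (rule eq_matI) (use assms in \<open>auto simp del: index_mult_mat(1) simp: index_transpose_diag sum_distrib_left sum.distrib algebra_simps\<close>)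

lemma Delta_mat_eq:
  assumes "N \<in> carrier_mat K d"
  shows "Delta_mat K ppi N = transpose_mat N * mat_diag K ppi * N"
proof (rule eq_matI)
  fix i j assume "i < dim_row (transpose_mat N * mat_diag K ppi * N)" "j < dim_col (transpose_mat N * mat_diag K ppi * N)"
  hence ij: "i < d" "j < d" using assms by auto
  thus "Delta_mat K ppi N $$ (i, j) = (transpose_mat N * mat_diag K ppi * N) $$ (i, j)"
    unfolding index_transpose_diag[OF assms ij] using assms by (simp add: Delta_mat_def mult_ac)
qed (use assms in \<open>auto simp: Delta_mat_def\<close>)

lemma Sigma_mat_eq:
  assumes "B \<in> carrier_mat K K" "N \<in> carrier_mat K d"
  shows "Sigma_mat B ppi dp dm N k = Ipm dp dm * minv (Delta_mat K ppi N)
    * (transpose_mat N * mat_diag K (\<lambda>i. ppi i * B $$ (k, i) * (1 - B $$ (k, i))) * N)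
    * minv (Delta_mat K ppi N) * Ipm dp dm"
proof -
  have "mat (dim_col N) (dim_col N) (\<lambda>(i, j). \<Sum>a<K. ppi a * B $$ (k, a) * (1 - B $$ (k, a)) * N $$ (a, i) * N $$ (a, j))
    = transpose_mat N * mat_diag K (\<lambda>i. ppi i * B $$ (k, i) * (1 - B $$ (k, i))) * N"
    by (rule eq_matI) (use assms in \<open>auto simp del: index_mult_mat(1) simp: index_transpose_diag\<close>)
  thus ?thesis unfolding Sigma_mat_def Let_def using assms by simp
qed

definition chernoff_weight :: "real mat \<Rightarrow> (nat \<Rightarrow> real) \<Rightarrow> nat \<Rightarrow> nat \<Rightarrow> real \<Rightarrow> nat \<Rightarrow> real" where
  "chernoff_weight B ppi k l t i =
     ppi i * (t * (B $$ (k, i) * (1 - B $$ (k, i))) + (1 - t) * (B $$ (l, i) * (1 - B $$ (l, i))))"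

definition chernoff_contrast :: "real mat \<Rightarrow> (nat \<Rightarrow> real) \<Rightarrow> nat \<Rightarrow> nat \<Rightarrow> nat \<Rightarrow> real" where
  "chernoff_contrast B ppi k l i = ppi i * (B $$ (i, k) - B $$ (i, l))"

definition chernoff_objective :: "real mat \<Rightarrow> (nat \<Rightarrow> real) \<Rightarrow> nat \<Rightarrow> nat \<Rightarrow> real \<Rightarrow> real vec \<Rightarrow> real" where
  "chernoff_objective B ppi k l t u =
     2 * (\<Sum>i<dim_row B. u $ i * chernoff_contrast B ppi k l i)
       - (\<Sum>i<dim_row B. chernoff_weight B ppi k l t i * (u $ i)\<^sup>2)"

definition chernoff_quad :: "real mat \<Rightarrow> (nat \<Rightarrow> real) \<Rightarrow> nat \<Rightarrow> nat \<Rightarrow> real mat \<Rightarrow> nat \<Rightarrow> nat \<Rightarrow> real \<Rightarrow> real" where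
  "chernoff_quad B ppi dp dm nu k l t =
     (let x = row nu k - row nu l;
          St = t \<cdot>\<^sub>m Sigma_mat B ppi dp dm nu k + (1 - t) \<cdot>\<^sub>m Sigma_mat B ppi dp dm nu l
      in x \<bullet> (minv St *\<^sub>v x))"

lemma C_kl_eq_SUP_chernoff_quad:
  "C_kl B ppi dp dm nu k l = (SUP t\<in>{0<..<1::real}. t * (1 - t) * chernoff_quad B ppi dp dm nu k l t)"
  unfolding C_kl_def chernoff_quad_def Let_def ..

lemma Sigma_mat_mix_eq:
  assumes B: "B \<in> carrier_mat K K" and N: "N \<in> carrier_mat K (dp + dm)"
    and Di: "minv (Delta_mat K ppi N) \<in> carrier_mat (dp + dm) (dp + dm)"
  shows "t \<cdot>\<^sub>m Sigma_mat B ppi dp dm N k + (1 - t) \<cdot>\<^sub>m Sigma_mat B ppi dp dm N l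
    = Ipm dp dm * minv (Delta_mat K ppi N) * (transpose_mat N * mat_diag K (chernoff_weight B ppi k l t) * N)
      * minv (Delta_mat K ppi N) * Ipm dp dm"
proof -
  have "chernoff_weight B ppi k l t = (\<lambda>i. t * (ppi i * B $$ (k, i) * (1 - B $$ (k, i)))
      + (1 - t) * (ppi i * B $$ (l, i) * (1 - B $$ (l, i))))"
    by (auto simp: chernoff_weight_def algebra_simps)
  thus ?thesis
    unfolding Sigma_mat_eq[OF B N]
    by (simp add: conj_smult_add[OF Ipm_carrier Di] N flip: transpose_diag_smult_add[OF N])
qed

lemma transpose_diag_completing_square:
  fixes N :: "real mat"
  assumes N: "N \<in> carrier_mat K d" and h: "h \<in> carrier_vec d" and w: "w \<in> carrier_vec d"
  shows "2 * (w \<bullet> ((transpose_mat N * mat_diag K g * N) *\<^sub>v h)) - (\<Sum>i<K. g i * ((N *\<^sub>v w) $ i)\<^sup>2)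
    = h \<bullet> ((transpose_mat N * mat_diag K g * N) *\<^sub>v h) - (\<Sum>i<K. g i * ((N *\<^sub>v w) $ i - (N *\<^sub>v h) $ i)\<^sup>2)"
  unfolding quadratic_form_transpose_diag[OF N w h] quadratic_form_transpose_diag[OF N h h]
  by (simp add: power2_diff algebra_simps sum.distrib sum_subtractf sum_distrib_left power2_eq_square)

context
  fixes B U S :: "real mat" and K dp dm :: nat and ppi :: "nat \<Rightarrow> real" and k l :: nat and t :: real
  assumes B: "B \<in> carrier_mat K K" and sd: "spec_decomp B dp dm U S"
    and B01: "\<forall>i<K. \<forall>j<K. 0 < B $$ (i, j) \<and> B $$ (i, j) < 1"
    and ppos: "\<forall>i<K. 0 < ppi i" and kl: "k < K" "l < K" and t: "0 < t" "t < 1"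
begin

lemma chernoff_weight_pos: "i < K \<Longrightarrow> 0 < chernoff_weight B ppi k l t i"
  using B01 kl t ppos unfolding chernoff_weight_def by (auto intro!: add_pos_pos mult_pos_pos)

lemma det_Delta_mat_nonzero: "det (Delta_mat K ppi (nu_mat U S)) \<noteq> 0"
  unfolding Delta_mat_eq[OF nu_mat_carrier[OF B sd]] using ppos nu_mat_injective[OF B sd]
  by (intro det_transpose_diag_nonzero[OF nu_mat_carrier[OF B sd]]) auto

lemma Delta_mult_Ipm_row_diff:
  "Delta_mat K ppi (nu_mat U S) *\<^sub>v (Ipm dp dm *\<^sub>v (row (nu_mat U S) k - row (nu_mat U S) l))
    = transpose_mat (nu_mat U S) *\<^sub>v vec K (chernoff_contrast B ppi k l)"
proof -
  let ?N = "nu_mat U S" and ?d = "dp + dm" and ?J = "Ipm dp dm"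
  note N = nu_mat_carrier[OF B sd]
  define e :: "real vec" where "e = unit_vec K k - unit_vec K l"
  have e: "e \<in> carrier_vec K" unfolding e_def by simp
  have "row ?N k - row ?N l = transpose_mat ?N *\<^sub>v e"
    using N kl e by (intro eq_vecI) (auto simp: e_def scalar_prod_minus_distrib[of _ K])
  hence "?N *\<^sub>v (?J *\<^sub>v (row ?N k - row ?N l)) = B *\<^sub>v e"
    using N e by (simp add: nu_mat_factorization[OF B sd] assoc_mult_mat_vec[of _ K ?d _ ?d] assoc_mult_mat_vec[of _ K ?d _ K])
  moreover have "mat_diag K ppi *\<^sub>v (B *\<^sub>v e) = vec K (chernoff_contrast B ppi k l)"
    using B kl e by (auto simp: mat_diag_mult_vec e_def chernoff_contrast_def scalar_prod_minus_distrib[of _ K])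
  moreover have "?J *\<^sub>v (row ?N k - row ?N l) \<in> carrier_vec ?d"
    using N kl by (auto intro!: mult_mat_vec_carrier[OF Ipm_carrier])
  ultimately show ?thesis unfolding Delta_mat_eq[OF N] by (simp add: transpose_diag_mult_vec[OF N])
qed

lemma det_weight_gram_nonzero:
  "det (transpose_mat (nu_mat U S) * mat_diag K (chernoff_weight B ppi k l t) * nu_mat U S) \<noteq> 0"
  using chernoff_weight_pos nu_mat_injective[OF B sd]
  by (intro det_transpose_diag_nonzero[OF nu_mat_carrier[OF B sd]]) auto

lemma Sigma_mat_mix_invertible:
  defines "St \<equiv> t \<cdot>\<^sub>m Sigma_mat B ppi dp dm (nu_mat U S) k + (1 - t) \<cdot>\<^sub>m Sigma_mat B ppi dp dm (nu_mat U S) l"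
  shows "St \<in> carrier_mat (dp + dm) (dp + dm)" "det St \<noteq> 0"
proof -
  let ?N = "nu_mat U S" and ?d = "dp + dm" and ?J = "Ipm dp dm"
  let ?D = "Delta_mat K ppi ?N" and ?M = "transpose_mat ?N * mat_diag K (chernoff_weight B ppi k l t) * ?N"
  note N = nu_mat_carrier[OF B sd]
  have D: "?D \<in> carrier_mat ?d ?d" unfolding Delta_mat_eq[OF N] using N by simp
  note Di = minv_inverse[OF D det_Delta_mat_nonzero]
  have M: "?M \<in> carrier_mat ?d ?d" using N by simp
  have St_eq: "St = ?J * minv ?D * ?M * minv ?D * ?J"
    unfolding St_def by (rule Sigma_mat_mix_eq[OF B N Di(3)])
  have prods: "?J * minv ?D \<in> carrier_mat ?d ?d" "?J * minv ?D * ?M \<in> carrier_mat ?d ?d"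
    "?J * minv ?D * ?M * minv ?D \<in> carrier_mat ?d ?d"
    using Di(3) M Ipm_carrier by (meson mult_carrier_mat)+
  thus "St \<in> carrier_mat ?d ?d" unfolding St_eq using Ipm_carrier by (meson mult_carrier_mat)
  have "det ?J \<noteq> 0" by (rule det_nonzero_if_left_inverse[OF Ipm_carrier Ipm_carrier Ipm_involutive])
  moreover have "det (minv ?D) \<noteq> 0" by (rule det_nonzero_if_left_inverse[OF Di(3) D Di(1)])
  ultimately show "det St \<noteq> 0"
    unfolding St_eq using Di(3) M det_weight_gram_nonzero prods by (simp add: det_mult[of _ ?d])
qed

lemma chernoff_quad_eq_quadratic_form:
  defines "M \<equiv> transpose_mat (nu_mat U S) * mat_diag K (chernoff_weight B ppi k l t) * nu_mat U S"
    and "g \<equiv> transpose_mat (nu_mat U S) *\<^sub>v vec K (chernoff_contrast B ppi k l)"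
  shows "chernoff_quad B ppi dp dm (nu_mat U S) k l t = g \<bullet> (minv M *\<^sub>v g)"
proof -
  let ?N = "nu_mat U S" and ?d = "dp + dm" and ?J = "Ipm dp dm"
  let ?D = "Delta_mat K ppi ?N"
  note N = nu_mat_carrier[OF B sd]
  have D: "?D \<in> carrier_mat ?d ?d" and symD: "transpose_mat ?D = ?D"
    unfolding Delta_mat_eq[OF N] using N symmetric_transpose_diag by auto
  note Di = minv_inverse[OF D det_Delta_mat_nonzero]
  have M: "M \<in> carrier_mat ?d ?d" unfolding M_def using N by simp
  note detM = det_weight_gram_nonzero[folded M_def]
  define x where "x = row ?N k - row ?N l"
  have x: "x \<in> carrier_vec ?d" using N kl by (simp add: x_def)
  define St where "St = t \<cdot>\<^sub>m Sigma_mat B ppi dp dm ?N k + (1 - t) \<cdot>\<^sub>m Sigma_mat B ppi dp dm ?N l"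
  note St = Sigma_mat_mix_invertible[folded St_def]
  have g: "g \<in> carrier_vec ?d" unfolding g_def using N by simp
  define h where "h = minv M *\<^sub>v g"
  have h: "h \<in> carrier_vec ?d" and Mh: "M *\<^sub>v h = g"
    unfolding h_def using minv_inverse(3)[OF M detM] minv_mult_vec_cancel(2)[OF M detM g] g by auto
  have g_eq: "?D *\<^sub>v (?J *\<^sub>v x) = g" unfolding g_def x_def by (rule Delta_mult_Ipm_row_diff)
  txt \<open>\<open>z = I\<^sub>d\<^sub>+\<^sub>d\<^sub>- \<Delta> M\<^sup>-\<^sup>1 g\<close> solves \<open>\<Sigma>\<^sub>t z = x\<close>.\<close>
  define z where "z = ?J *\<^sub>v (?D *\<^sub>v h)"
  have Dh: "?D *\<^sub>v h \<in> carrier_vec ?d" using D h by simp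
  have z: "z \<in> carrier_vec ?d" unfolding z_def using Dh by (simp add: mult_mat_vec_carrier[OF Ipm_carrier])
  have "St *\<^sub>v z = ?J *\<^sub>v (minv ?D *\<^sub>v (M *\<^sub>v (minv ?D *\<^sub>v (?J *\<^sub>v z))))"
    unfolding St_def M_def Sigma_mat_mix_eq[OF B N Di(3)]
    by (rule assoc_mult_mat_vec5[OF Ipm_carrier Di(3) M[unfolded M_def] Di(3) Ipm_carrier z])
  also have "minv ?D *\<^sub>v (?J *\<^sub>v z) = h"
    unfolding z_def Ipm_mult_Ipm_mult_vec[OF Dh] by (rule minv_mult_vec_cancel(1)[OF D det_Delta_mat_nonzero h])
  also have "?J *\<^sub>v (minv ?D *\<^sub>v (M *\<^sub>v h)) = x"
    unfolding Mh g_eq[symmetric] minv_mult_vec_cancel(1)[OF D det_Delta_mat_nonzero mult_mat_vec_carrier[OF Ipm_carrier x]]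
    by (rule Ipm_mult_Ipm_mult_vec[OF x])
  finally have "minv St *\<^sub>v x = z" using minv_mult_vec_cancel(1)[OF St z] by simp
  hence "chernoff_quad B ppi dp dm ?N k l t = x \<bullet> z"
    unfolding chernoff_quad_def Let_def x_def[symmetric] St_def[symmetric] by simp
  also have "\<dots> = (?J *\<^sub>v x) \<bullet> (?D *\<^sub>v h)"
    unfolding z_def by (rule scalar_prod_symmetric_mat[OF Ipm_carrier symmetric_Ipm x Dh])
  also have "\<dots> = (?D *\<^sub>v (?J *\<^sub>v x)) \<bullet> h"
    using scalar_prod_symmetric_mat[OF D symD _ h, of "?J *\<^sub>v x"] x
    by (simp add: mult_mat_vec_carrier[OF Ipm_carrier])
  also have "\<dots> = g \<bullet> (minv M *\<^sub>v g)" unfolding g_eq h_def ..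
  finally show ?thesis .
qed

lemma chernoff_objective_nu_mat:
  assumes w: "w \<in> carrier_vec (dp + dm)"
  shows "chernoff_objective B ppi k l t (nu_mat U S *\<^sub>v w)
    = 2 * (w \<bullet> (transpose_mat (nu_mat U S) *\<^sub>v vec K (chernoff_contrast B ppi k l)))
      - (\<Sum>i<K. chernoff_weight B ppi k l t i * ((nu_mat U S *\<^sub>v w) $ i)\<^sup>2)"
proof -
  note N = nu_mat_carrier[OF B sd]
  have "(\<Sum>i<K. (nu_mat U S *\<^sub>v w) $ i * chernoff_contrast B ppi k l i)
    = (nu_mat U S *\<^sub>v w) \<bullet> vec K (chernoff_contrast B ppi k l)"
    unfolding scalar_prod_def by (simp add: atLeast0LessThan)
  thus ?thesis
    unfolding chernoff_objective_def scalar_prod_transpose_mult_vec[OF N w vec_carrier] using B by simp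
qed

lemma chernoff_quad_variational:
  "\<exists>u\<in>mat_range B. chernoff_quad B ppi dp dm (nu_mat U S) k l t = chernoff_objective B ppi k l t u"
  "\<forall>u\<in>mat_range B. chernoff_objective B ppi k l t u \<le> chernoff_quad B ppi dp dm (nu_mat U S) k l t"
proof -
  let ?N = "nu_mat U S" and ?d = "dp + dm"
  define M where "M = transpose_mat ?N * mat_diag K (chernoff_weight B ppi k l t) * ?N"
  define g where "g = transpose_mat ?N *\<^sub>v vec K (chernoff_contrast B ppi k l)"
  note N = nu_mat_carrier[OF B sd]
  have M: "M \<in> carrier_mat ?d ?d" unfolding M_def using N by simp
  note detM = det_weight_gram_nonzero[folded M_def]
  have g: "g \<in> carrier_vec ?d" unfolding g_def using N by simp
  define h where "h = minv M *\<^sub>v g"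
  have h: "h \<in> carrier_vec ?d" and Mh: "M *\<^sub>v h = g"
    unfolding h_def using minv_inverse(3)[OF M detM] minv_mult_vec_cancel(2)[OF M detM g] g by auto
  have "chernoff_quad B ppi dp dm ?N k l t = g \<bullet> h"
    unfolding h_def M_def g_def by (rule chernoff_quad_eq_quadratic_form)
  hence quad: "chernoff_quad B ppi dp dm ?N k l t = h \<bullet> (M *\<^sub>v h)"
    unfolding Mh using comm_scalar_prod[OF g h] by simp
  have obj: "chernoff_objective B ppi k l t (?N *\<^sub>v w) = chernoff_quad B ppi dp dm ?N k l t
      - (\<Sum>i<K. chernoff_weight B ppi k l t i * ((?N *\<^sub>v w) $ i - (?N *\<^sub>v h) $ i)\<^sup>2)"
    if w: "w \<in> carrier_vec ?d" for w
    unfolding chernoff_objective_nu_mat[OF w] quad g_def[symmetric] Mh[symmetric] M_def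
    by (rule transpose_diag_completing_square[OF N h w])
  show "\<exists>u\<in>mat_range B. chernoff_quad B ppi dp dm ?N k l t = chernoff_objective B ppi k l t u"
    using obj[OF h] h N mat_range_nu_mat[OF B sd] unfolding mat_range_def by force
  show "\<forall>u\<in>mat_range B. chernoff_objective B ppi k l t u \<le> chernoff_quad B ppi dp dm ?N k l t"
  proof
    fix u assume "u \<in> mat_range B"
    then obtain w where w: "w \<in> carrier_vec ?d" and u: "u = ?N *\<^sub>v w"
      using mat_range_nu_mat[OF B sd] N unfolding mat_range_def by auto
    have "0 \<le> (\<Sum>i<K. chernoff_weight B ppi k l t i * ((?N *\<^sub>v w) $ i - (?N *\<^sub>v h) $ i)\<^sup>2)"
      using chernoff_weight_pos by (intro sum_nonneg) (simp add: less_imp_le)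
    thus "chernoff_objective B ppi k l t u \<le> chernoff_quad B ppi dp dm ?N k l t"
      unfolding u obj[OF w] by simp
  qed
qed

end

section \<open>Scaling the connectivity matrix\<close>

lemma chernoff_objective_smult_le:
  fixes B :: "real mat"
  assumes B: "B \<in> carrier_mat K K" and B0: "\<forall>i<K. \<forall>j<K. 0 \<le> B $$ (i, j)"
    and ppi: "\<forall>i<K. 0 \<le> ppi i" and c: "0 < c" "c \<le> c'" and kl: "k < K" "l < K" and t: "0 \<le> t" "t \<le> 1"
  shows "(c' / c) * chernoff_objective (c \<cdot>\<^sub>m B) ppi k l t u \<le> chernoff_objective (c' \<cdot>\<^sub>m B) ppi k l t u"
proof -
  have contrast: "chernoff_contrast (c' \<cdot>\<^sub>m B) ppi k l i = (c' / c) * chernoff_contrast (c \<cdot>\<^sub>m B) ppi k l i"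
    if "i < K" for i
    unfolding chernoff_contrast_def using B kl c that by (auto simp: field_simps)
  have weight: "chernoff_weight (c' \<cdot>\<^sub>m B) ppi k l t i \<le> (c' / c) * chernoff_weight (c \<cdot>\<^sub>m B) ppi k l t i"
    if i: "i < K" for i
  proof -
    have var: "c' * b * (1 - c' * b) \<le> c' * b * (1 - c * b)" if "0 \<le> b" for b :: real
      using c that by (intro mult_left_mono) (auto intro: mult_right_mono)
    have "chernoff_weight (c' \<cdot>\<^sub>m B) ppi k l t i
      \<le> ppi i * (t * (c' * B $$ (k, i) * (1 - c * B $$ (k, i))) + (1 - t) * (c' * B $$ (l, i) * (1 - c * B $$ (l, i))))"
      unfolding chernoff_weight_def using B B0 kl i ppi t
      by (auto intro!: mult_left_mono add_mono var)
    also have "\<dots> = (c' / c) * chernoff_weight (c \<cdot>\<^sub>m B) ppi k l t i"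
      unfolding chernoff_weight_def using B kl i c by (simp add: field_simps)
    finally show ?thesis .
  qed
  have "(c' / c) * chernoff_objective (c \<cdot>\<^sub>m B) ppi k l t u
     = 2 * (\<Sum>i<K. u $ i * ((c' / c) * chernoff_contrast (c \<cdot>\<^sub>m B) ppi k l i))
       - (\<Sum>i<K. (c' / c) * chernoff_weight (c \<cdot>\<^sub>m B) ppi k l t i * (u $ i)\<^sup>2)"
    unfolding chernoff_objective_def using B by (simp add: sum_distrib_left right_diff_distrib mult_ac)
  also have "\<dots> \<le> chernoff_objective (c' \<cdot>\<^sub>m B) ppi k l t u"
  proof -
    have "(\<Sum>i<K. chernoff_weight (c' \<cdot>\<^sub>m B) ppi k l t i * (u $ i)\<^sup>2)
      \<le> (\<Sum>i<K. (c' / c) * chernoff_weight (c \<cdot>\<^sub>m B) ppi k l t i * (u $ i)\<^sup>2)"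
      using weight by (intro sum_mono mult_right_mono) auto
    thus ?thesis unfolding chernoff_objective_def using B contrast by simp
  qed
  finally show ?thesis .
qed

lemma chernoff_objective_le_sum:
  assumes "\<And>i. i < dim_row B \<Longrightarrow> 0 < chernoff_weight B ppi k l t i"
  shows "chernoff_objective B ppi k l t u
    \<le> (\<Sum>i<dim_row B. (chernoff_contrast B ppi k l i)\<^sup>2 / chernoff_weight B ppi k l t i)"
proof -
  have "2 * (a * y) - D * a\<^sup>2 \<le> y\<^sup>2 / D" if "0 < D" for D y a :: real
  proof -
    have "0 \<le> (D * a - y)\<^sup>2 / D" using that by simp
    also have "\<dots> = D * a\<^sup>2 - 2 * (a * y) + y\<^sup>2 / D"
      using that by (simp add: power2_diff field_simps power2_eq_square)
    finally show ?thesis by simp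
  qed
  hence "(\<Sum>i<dim_row B. 2 * (u $ i * chernoff_contrast B ppi k l i) - chernoff_weight B ppi k l t i * (u $ i)\<^sup>2)
    \<le> (\<Sum>i<dim_row B. (chernoff_contrast B ppi k l i)\<^sup>2 / chernoff_weight B ppi k l t i)"
    using assms by (intro sum_mono) auto
  thus ?thesis unfolding chernoff_objective_def by (simp add: sum_subtractf sum_distrib_left)
qed

lemma smult_mat_entries_unit_interval:
  fixes B :: "real mat"
  assumes "\<forall>i<K. \<forall>j<K. 0 < B $$ (i, j) \<and> B $$ (i, j) < 1" "B \<in> carrier_mat K K" "0 < c" "c \<le> 1"
  shows "\<forall>i<K. \<forall>j<K. 0 < (c \<cdot>\<^sub>m B) $$ (i, j) \<and> (c \<cdot>\<^sub>m B) $$ (i, j) < 1"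
proof (intro allI impI)
  fix i j assume ij: "i < K" "j < K"
  have b: "0 < B $$ (i, j)" "B $$ (i, j) < 1" using assms ij by auto
  have "c * B $$ (i, j) \<le> 1 * B $$ (i, j)" by (rule mult_right_mono) (use assms b in auto)
  hence "c * B $$ (i, j) < 1" using b by linarith
  thus "0 < (c \<cdot>\<^sub>m B) $$ (i, j) \<and> (c \<cdot>\<^sub>m B) $$ (i, j) < 1" using assms ij b by auto
qed

lemma chernoff_quad_smult_le:
  fixes B :: "real mat"
  assumes B: "B \<in> carrier_mat K K" and B01: "\<forall>i<K. \<forall>j<K. 0 < B $$ (i, j) \<and> B $$ (i, j) < 1"
    and ppos: "\<forall>i<K. 0 < ppi i" and c: "0 < c" "c \<le> c'" "c' \<le> 1"
    and sd: "spec_decomp (c \<cdot>\<^sub>m B) dp dm U S" and sd': "spec_decomp (c' \<cdot>\<^sub>m B) dp' dm' U' S'"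
    and kl: "k < K" "l < K" and t: "0 < t" "t < 1"
  shows "(c' / c) * chernoff_quad (c \<cdot>\<^sub>m B) ppi dp dm (nu_mat U S) k l t
    \<le> chernoff_quad (c' \<cdot>\<^sub>m B) ppi dp' dm' (nu_mat U' S') k l t"
proof -
  have cB: "c \<cdot>\<^sub>m B \<in> carrier_mat K K" and c'B: "c' \<cdot>\<^sub>m B \<in> carrier_mat K K" using B by auto
  note var = chernoff_quad_variational[OF cB sd smult_mat_entries_unit_interval[OF B01 B c(1)] ppos kl t]
  note var' = chernoff_quad_variational[OF c'B sd' smult_mat_entries_unit_interval[OF B01 B] ppos kl t]
  obtain u where u: "u \<in> mat_range (c \<cdot>\<^sub>m B)"
    and q: "chernoff_quad (c \<cdot>\<^sub>m B) ppi dp dm (nu_mat U S) k l t = chernoff_objective (c \<cdot>\<^sub>m B) ppi k l t u"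
    using var(1) c by auto
  have "u \<in> mat_range (c' \<cdot>\<^sub>m B)" using u mat_range_smult[OF B] c by simp
  moreover have "(c' / c) * chernoff_objective (c \<cdot>\<^sub>m B) ppi k l t u \<le> chernoff_objective (c' \<cdot>\<^sub>m B) ppi k l t u"
    using B01 ppos t c by (intro chernoff_objective_smult_le[OF B _ _ _ _ kl]) (auto intro: less_imp_le)
  ultimately show ?thesis unfolding q using var'(2) c by force
qed

lemma chernoff_quad_nonneg:
  fixes B :: "real mat"
  assumes B: "B \<in> carrier_mat K K" and sd: "spec_decomp B dp dm U S"
    and B01: "\<forall>i<K. \<forall>j<K. 0 < B $$ (i, j) \<and> B $$ (i, j) < 1"
    and ppos: "\<forall>i<K. 0 < ppi i" and kl: "k < K" "l < K" and t: "0 < t" "t < 1"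
  shows "0 \<le> chernoff_quad B ppi dp dm (nu_mat U S) k l t"
proof -
  have "0\<^sub>v K \<in> mat_range B" unfolding mat_range_def using B by (auto intro!: image_eqI[of _ _ "0\<^sub>v K"])
  moreover have "chernoff_objective B ppi k l t (0\<^sub>v K) = 0" unfolding chernoff_objective_def using B by simp
  ultimately show ?thesis using chernoff_quad_variational(2)[OF assms] by force
qed

lemma chernoff_quad_bdd_above:
  fixes B :: "real mat"
  assumes B: "B \<in> carrier_mat K K" and sd: "spec_decomp B dp dm U S"
    and B01: "\<forall>i<K. \<forall>j<K. 0 < B $$ (i, j) \<and> B $$ (i, j) < 1"
    and ppos: "\<forall>i<K. 0 < ppi i" and kl: "k < K" "l < K"
  shows "bdd_above ((\<lambda>t. t * (1 - t) * chernoff_quad B ppi dp dm (nu_mat U S) k l t) ` {0<..<1})"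
proof -
  define a where "a = (\<lambda>j i. B $$ (j, i) * (1 - B $$ (j, i)))"
  define bound where "bound = (\<Sum>i<K. (chernoff_contrast B ppi k l i)\<^sup>2 / (ppi i * min (a k i) (a l i)))"
  have "t * (1 - t) * chernoff_quad B ppi dp dm (nu_mat U S) k l t \<le> bound" if t: "0 < t" "t < 1" for t
  proof -
    have "chernoff_quad B ppi dp dm (nu_mat U S) k l t
      \<le> (\<Sum>i<K. (chernoff_contrast B ppi k l i)\<^sup>2 / chernoff_weight B ppi k l t i)"
      using chernoff_quad_variational[OF B sd B01 ppos kl t] chernoff_objective_le_sum[of B ppi k l t]
        chernoff_weight_pos[OF B sd B01 ppos kl t] B by fastforce
    also have "\<dots> \<le> bound" unfolding bound_def
    proof (rule sum_mono)
      fix i assume "i \<in> {..<K}"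
      hence i: "i < K" by simp
      have a: "0 < a k i" "0 < a l i" unfolding a_def using B01 kl i by auto
      have "t * min (a k i) (a l i) \<le> t * a k i" "(1 - t) * min (a k i) (a l i) \<le> (1 - t) * a l i"
        using t by (auto intro: mult_left_mono)
      hence "min (a k i) (a l i) \<le> t * a k i + (1 - t) * a l i" by (simp add: algebra_simps)
      hence "ppi i * min (a k i) (a l i) \<le> chernoff_weight B ppi k l t i"
        unfolding chernoff_weight_def a_def using ppos i by (intro mult_left_mono) auto
      moreover have "0 < ppi i * min (a k i) (a l i)" using ppos i a by simp
      ultimately show "(chernoff_contrast B ppi k l i)\<^sup>2 / chernoff_weight B ppi k l t i
        \<le> (chernoff_contrast B ppi k l i)\<^sup>2 / (ppi i * min (a k i) (a l i))"
        by (intro divide_left_mono) auto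
    qed
    finally have "chernoff_quad B ppi dp dm (nu_mat U S) k l t \<le> bound" .
    moreover have "0 \<le> chernoff_quad B ppi dp dm (nu_mat U S) k l t"
      by (rule chernoff_quad_nonneg[OF B sd B01 ppos kl t])
    moreover have "0 \<le> t * (1 - t)" "t * (1 - t) \<le> 1" using t by (auto intro: mult_le_one)
    ultimately show ?thesis by (metis mult_left_le_one_le order.trans)
  qed
  thus ?thesis by (intro bdd_aboveI2) auto
qed

lemma chernoff_quad_half_pos:
  fixes B :: "real mat"
  assumes B: "B \<in> carrier_mat K K" and sd: "spec_decomp B dp dm U S"
    and B01: "\<forall>i<K. \<forall>j<K. 0 < B $$ (i, j) \<and> B $$ (i, j) < 1"
    and ppos: "\<forall>i<K. 0 < ppi i" and kl: "k < K" "l < K"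
    and i0: "i0 < K" "B $$ (i0, k) \<noteq> B $$ (i0, l)"
  shows "0 < chernoff_quad B ppi dp dm (nu_mat U S) k l (1 / 2)"
proof -
  define v where "v = B *\<^sub>v (unit_vec K k - unit_vec K l)"
  have v: "v $ i = B $$ (i, k) - B $$ (i, l)" if "i < K" for i
    unfolding v_def using B kl that by (simp add: scalar_prod_minus_distrib[of _ K])
  define P where "P = (\<Sum>i<K. ppi i * (v $ i)\<^sup>2)"
  define Q where "Q = (\<Sum>i<K. chernoff_weight B ppi k l (1 / 2) i * (v $ i)\<^sup>2)"
  have P: "0 < P" unfolding P_def
    using ppos i0 v by (intro sum_pos2[of _ i0]) (auto intro: less_imp_le)
  have Q: "0 \<le> Q" unfolding Q_def
    using chernoff_weight_pos[OF B sd B01 ppos kl, of "1 / 2"] by (intro sum_nonneg) (simp add: less_imp_le)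
  txt \<open>Along the direction \<open>v\<close> the objective is \<open>2 e P - e\<^sup>2 Q\<close>, positive for small \<open>e > 0\<close>.\<close>
  define e where "e = P / (Q + 1)"
  have e: "0 < e" "e * Q < P" unfolding e_def using P Q by (auto simp: field_simps)
  have "e \<cdot>\<^sub>v v \<in> mat_range B"
    unfolding mat_range_def v_def using B
    by (intro image_eqI[where x="e \<cdot>\<^sub>v (unit_vec K k - unit_vec K l)"]) (auto simp: mult_mat_vec)
  moreover have "chernoff_objective B ppi k l (1 / 2) (e \<cdot>\<^sub>v v) = e * (2 * P - e * Q)"
  proof -
    have dim: "dim_vec v = K" unfolding v_def using B by simp
    have "(\<Sum>i<K. (e \<cdot>\<^sub>v v) $ i * chernoff_contrast B ppi k l i) = e * P"
      unfolding P_def sum_distrib_left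
      by (rule sum.cong) (auto simp: dim v chernoff_contrast_def power2_eq_square)
    moreover have "(\<Sum>i<K. chernoff_weight B ppi k l (1 / 2) i * ((e \<cdot>\<^sub>v v) $ i)\<^sup>2) = e\<^sup>2 * Q"
      unfolding Q_def sum_distrib_left by (rule sum.cong) (auto simp: dim power2_eq_square)
    ultimately show ?thesis
      unfolding chernoff_objective_def using B by (simp add: power2_eq_square algebra_simps)
  qed
  moreover have "0 < e * (2 * P - e * Q)" using e P by (intro mult_pos_pos) auto
  ultimately show ?thesis
    using chernoff_quad_variational(2)[OF B sd B01 ppos kl, of "1 / 2"] by fastforce
qed

lemma C_kl_smult_strict_mono:
  fixes B :: "real mat"
  assumes B: "B \<in> carrier_mat K K" and B01: "\<forall>i<K. \<forall>j<K. 0 < B $$ (i, j) \<and> B $$ (i, j) < 1"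
    and ppos: "\<forall>i<K. 0 < ppi i" and c: "0 < c" "c < c'" "c' \<le> 1"
    and sd: "spec_decomp (c \<cdot>\<^sub>m B) dp dm U S" and sd': "spec_decomp (c' \<cdot>\<^sub>m B) dp' dm' U' S'"
    and kl: "k < K" "l < K" and i0: "i0 < K" "B $$ (i0, k) \<noteq> B $$ (i0, l)"
  shows "C_kl (c \<cdot>\<^sub>m B) ppi dp dm (nu_mat U S) k l < C_kl (c' \<cdot>\<^sub>m B) ppi dp' dm' (nu_mat U' S') k l"
  unfolding C_kl_eq_SUP_chernoff_quad
proof (rule cSUP_less_cSUP_scaled)
  have cB: "c \<cdot>\<^sub>m B \<in> carrier_mat K K" "c' \<cdot>\<^sub>m B \<in> carrier_mat K K" using B by auto
  note cB01 = smult_mat_entries_unit_interval[OF B01 B]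
  show "bdd_above ((\<lambda>t. t * (1 - t) * chernoff_quad (c' \<cdot>\<^sub>m B) ppi dp' dm' (nu_mat U' S') k l t) ` {0<..<1})"
    using c by (intro chernoff_quad_bdd_above[OF cB(2) sd' cB01 ppos kl]) auto
  show "(1 / 2 :: real) \<in> {0<..<1}" by simp
  have "(c \<cdot>\<^sub>m B) $$ (i0, k) \<noteq> (c \<cdot>\<^sub>m B) $$ (i0, l)" using B kl i0 c by auto
  thus "0 < 1 / 2 * (1 - 1 / 2) * chernoff_quad (c \<cdot>\<^sub>m B) ppi dp dm (nu_mat U S) k l (1 / 2)"
    using chernoff_quad_half_pos[OF cB(1) sd cB01 ppos kl i0(1)] c by simp
  show "1 < c' / c" using c by simp
  show "c' / c * (t * (1 - t) * chernoff_quad (c \<cdot>\<^sub>m B) ppi dp dm (nu_mat U S) k l t)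
    \<le> t * (1 - t) * chernoff_quad (c' \<cdot>\<^sub>m B) ppi dp' dm' (nu_mat U' S') k l t" if "t \<in> {0<..<1}" for t
  proof -
    have "c' / c * chernoff_quad (c \<cdot>\<^sub>m B) ppi dp dm (nu_mat U S) k l t
      \<le> chernoff_quad (c' \<cdot>\<^sub>m B) ppi dp' dm' (nu_mat U' S') k l t"
      using chernoff_quad_smult_le[OF B B01 ppos _ _ _ sd sd' kl, of t] that c by simp
    moreover have "0 \<le> t * (1 - t)" using that by simp
    ultimately show ?thesis by (metis mult_left_mono mult.left_commute)
  qed
qed

lemma chernoff_rho_eq_rho_emb:
  assumes "\<exists>dp dm U S. spec_decomp B dp dm U S"
  obtains dp dm U S where "spec_decomp B dp dm U S" "chernoff_rho B ppi = rho_emb B ppi dp dm (nu_mat U S)"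
proof -
  let ?P = "\<lambda>x. case x of (dp, dm, U, S) \<Rightarrow> spec_decomp B dp dm U S"
  obtain dp dm U S where eq: "(SOME x. ?P x) = (dp, dm, U, S)" by (metis prod_cases4)
  from assms obtain dp0 dm0 U0 S0 where "spec_decomp B dp0 dm0 U0 S0" by blast
  hence "\<exists>x. ?P x" by (intro exI[of _ "(dp0, dm0, U0, S0)"]) simp
  hence "?P (SOME x. ?P x)" by (rule someI_ex)
  hence "spec_decomp B dp dm U S" unfolding eq by simp
  moreover have "chernoff_rho B ppi = rho_emb B ppi dp dm (nu_mat U S)" unfolding chernoff_rho_def eq by simp
  ultimately show thesis by (rule that)
qed

lemma chernoff_rho_smult_strict_mono:
  fixes B :: "real mat"
  assumes K: "2 \<le> K" and B: "B \<in> carrier_mat K K" and B01: "\<forall>i<K. \<forall>j<K. 0 < B $$ (i, j) \<and> B $$ (i, j) < 1"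
    and sym: "transpose_mat B = B" and rows: "\<forall>i<K. \<forall>j<K. i \<noteq> j \<longrightarrow> row B i \<noteq> row B j"
    and ppos: "\<forall>i<K. 0 < ppi i" and c: "0 < c" "c < c'" "c' \<le> 1"
  shows "chernoff_rho (c \<cdot>\<^sub>m B) ppi < chernoff_rho (c' \<cdot>\<^sub>m B) ppi"
proof -
  have symB: "B $$ (i, j) = B $$ (j, i)" if "i < K" "j < K" for i j
    using sym B that by (metis carrier_matD index_transpose_mat(1))
  have decomp: "\<exists>dp dm U S. spec_decomp (a \<cdot>\<^sub>m B) dp dm U S" if "0 < a" "a \<le> 1" for a
  proof (rule spec_decomp_exists)
    show "a \<cdot>\<^sub>m B \<in> carrier_mat K K" using B by simp
    show "transpose_mat (a \<cdot>\<^sub>m B) = a \<cdot>\<^sub>m B"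
      using B symB by (intro eq_matI) auto
    show "0 < (a \<cdot>\<^sub>m B) $$ (0, 0)" using smult_mat_entries_unit_interval[OF B01 B that] K by simp
  qed (use K in simp)
  have c1: "c \<le> 1" "0 < c'" using c by auto
  obtain dp dm U S where sd: "spec_decomp (c \<cdot>\<^sub>m B) dp dm U S"
    and rho: "chernoff_rho (c \<cdot>\<^sub>m B) ppi = rho_emb (c \<cdot>\<^sub>m B) ppi dp dm (nu_mat U S)"
    using chernoff_rho_eq_rho_emb[OF decomp[OF c(1) c1(1)]] by blast
  obtain dp' dm' U' S' where sd': "spec_decomp (c' \<cdot>\<^sub>m B) dp' dm' U' S'"
    and rho': "chernoff_rho (c' \<cdot>\<^sub>m B) ppi = rho_emb (c' \<cdot>\<^sub>m B) ppi dp' dm' (nu_mat U' S')"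
    using chernoff_rho_eq_rho_emb[OF decomp[OF c1(2) c(3)]] by blast
  have C_less: "C_kl (c \<cdot>\<^sub>m B) ppi dp dm (nu_mat U S) k l < C_kl (c' \<cdot>\<^sub>m B) ppi dp' dm' (nu_mat U' S') k l"
    if kl: "k < K" "l < K" "k \<noteq> l" for k l
  proof -
    txt \<open>Distinct rows of the symmetric \<open>B\<close> are distinct columns.\<close>
    obtain i0 where "i0 < K" "row B k $ i0 \<noteq> row B l $ i0"
      using rows kl B by (metis carrier_matD(2) eq_vecI index_row(2))
    hence "i0 < K" "B $$ (i0, k) \<noteq> B $$ (i0, l)" using B kl symB by auto
    thus ?thesis by (rule C_kl_smult_strict_mono[OF B B01 ppos c sd sd' kl(1,2)])
  qed
  have dims: "dim_row (c \<cdot>\<^sub>m B) = K" "dim_row (c' \<cdot>\<^sub>m B) = K" using B by auto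
  show ?thesis unfolding rho rho' rho_emb_def dims by (rule Min_offdiagonal_strict_mono[OF K C_less])
qed

theorem corollary1:
  fixes K :: nat and ppi :: "nat \<Rightarrow> real" and B :: "real mat" and p0 p1 :: real
  assumes "K \<ge> 2"
    and "\<forall>k<K. 0 < ppi k \<and> ppi k < 1"
    and "(\<Sum>k<K. ppi k) = 1"
    and "B \<in> carrier_mat K K"
    and "\<forall>i<K. \<forall>j<K. 0 < B $$ (i,j) \<and> B $$ (i,j) < 1"
    and "transpose_mat B = B"
    and "\<forall>i<K. \<forall>j<K. i \<noteq> j \<longrightarrow> row B i \<noteq> row B j"
    and "0 < p0" and "p0 < 1"
    and "0 < p1" and "p1 < 1 - p0"
  shows "chernoff_superior B ((p0 + p1) \<cdot>\<^sub>m B) ppi \<and>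
         chernoff_superior ((p0 + p1) \<cdot>\<^sub>m B) (p0 \<cdot>\<^sub>m B) ppi"
proof -
  have ppos: "\<forall>i<K. 0 < ppi i" using assms(2) by simp
  note mono = chernoff_rho_smult_strict_mono[OF assms(1,4,5,6,7) ppos]
  have "chernoff_rho ((p0 + p1) \<cdot>\<^sub>m B) ppi < chernoff_rho (1 \<cdot>\<^sub>m B) ppi"
    by (rule mono) (use assms in auto)
  moreover have "chernoff_rho (p0 \<cdot>\<^sub>m B) ppi < chernoff_rho ((p0 + p1) \<cdot>\<^sub>m B) ppi"
    by (rule mono) (use assms in auto)
  moreover have "1 \<cdot>\<^sub>m B = B" by (rule eq_matI) auto
  ultimately show ?thesis unfolding chernoff_superior_def by simp
qed

end
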